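(* Let $\mathbf{K}$ be a $(\phi,\delta)$-field with $\mathbf{k}:=\mathbf{K}^\phi$ algebraically closed, let $(a,b)\in\mathbf{K}^\times\times\mathbf{K}$, let $R$ be a $\mathbf{K}$-$(\phi,\delta)$-algebra and $v\in R\setminus\{0\}$. (i) If $\phi(v)-v=b$ and $v$ is hyperalgebraic over $\mathbf{K}$, then there exist a nonzero linear homogeneous $\delta$-polynomial $\mathcal{L}(y)\in\mathbf{k}\{y\}$ and $f\in\mathbf{K}$ such that $\mathcal{L}(b)=\phi(f)-f$. (ii) Assume moreover that $v$ is invertible in $R$. If $\phi(v)=av$ and $v$ is hyperalgebraic over $\mathbf{K}$, then there exist a nonzero linear homogeneous $\delta$-polynomial $\mathcal{L}(y)\in\mathbf{k}\{y\}$ and $f\in\mathbf{K}$ such that $\mathcal{L}\left(\frac{\delta(a)}{a}\right)=\phi(f)-f$. The converse of either statement holds if $R^\phi=\mathbf{k}$.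
   Context: A $(\phi,\delta)$-field is a field (of characteristic zero) with an automorphism $\phi$ and a derivation $\delta$ that commute; $\mathbf{K}^\phi=\{f:\phi(f)=f\}$ is stable under $\delta$. A $\mathbf{K}$-$(\phi,\delta)$-algebra is a commutative ring extension of $\mathbf{K}$ with an automorphism and commuting derivation extending $\phi,\delta$. $\mathbf{k}\{y\}$ is the ring of differential polynomials (polynomials in $y,\delta y,\delta^2y,\dots$) over $\mathbf{k}$; a linear homogeneous one has the form $\sum_i c_i\delta^i(y)$. $v$ hyperalgebraic over $\mathbf{K}$ means $P(v)=0$ for some nonzero $P\in\mathbf{K}\{y\}$. *)

theory Defs
  imports Main "HOL-Library.Poly_Mapping" "HOL-Computational_Algebra.Polynomial"
begin

text \<open>The ambient (phi,delta)-algebra R is a type 'r; the base field K is a subset of it.\<close>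

definition subfield_of :: "'r::comm_ring_1 set \<Rightarrow> bool" where
  "subfield_of K \<longleftrightarrow> 0 \<in> K \<and> 1 \<in> K \<and> (\<forall>x\<in>K. \<forall>y\<in>K. x + y \<in> K \<and> x - y \<in> K \<and> x * y \<in> K)
     \<and> (\<forall>x\<in>K. x \<noteq> 0 \<longrightarrow> (\<exists>y\<in>K. x * y = 1))"

definition ring_automorphism :: "('r::comm_ring_1 \<Rightarrow> 'r) \<Rightarrow> bool" where
  "ring_automorphism \<phi> \<longleftrightarrow> bij \<phi> \<and> \<phi> 1 = 1 \<and> (\<forall>x y. \<phi> (x + y) = \<phi> x + \<phi> y \<and> \<phi> (x * y) = \<phi> x * \<phi> y)"

definition derivation :: "('r::comm_ring_1 \<Rightarrow> 'r) \<Rightarrow> bool" where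
  "derivation \<delta> \<longleftrightarrow> (\<forall>x y. \<delta> (x + y) = \<delta> x + \<delta> y \<and> \<delta> (x * y) = x * \<delta> y + \<delta> x * y)"

definition phi_delta_setting :: "'r::comm_ring_1 set \<Rightarrow> ('r \<Rightarrow> 'r) \<Rightarrow> ('r \<Rightarrow> 'r) \<Rightarrow> bool" where
  "phi_delta_setting K \<phi> \<delta> \<longleftrightarrow> subfield_of K \<and> (\<forall>n::nat. n > 0 \<longrightarrow> (of_nat n :: 'r) \<noteq> 0)
     \<and> ring_automorphism \<phi> \<and> \<phi> ` K = K \<and> derivation \<delta> \<and> \<delta> ` K \<subseteq> K
     \<and> (\<forall>x. \<phi> (\<delta> x) = \<delta> (\<phi> x))"

definition const_field :: "'r set \<Rightarrow> ('r \<Rightarrow> 'r) \<Rightarrow> 'r set" where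
  "const_field K \<phi> = {x \<in> K. \<phi> x = x}"

definition alg_closed_subfield :: "'r::comm_ring_1 set \<Rightarrow> bool" where
  "alg_closed_subfield k \<longleftrightarrow> (\<forall>p :: 'r poly. (\<forall>i. coeff p i \<in> k) \<and> degree p \<ge> 1 \<longrightarrow> (\<exists>x\<in>k. poly p x = 0))"

text \<open>Differential polynomials in y: finitely supported maps from monomials
  (finitely supported exponent vectors for y, delta y, delta^2 y, ...) to coefficients.\<close>
type_synonym 'r dpoly = "(nat \<Rightarrow>\<^sub>0 nat) \<Rightarrow>\<^sub>0 'r"

definition dpoly_eval :: "('r::comm_ring_1 \<Rightarrow> 'r) \<Rightarrow> 'r dpoly \<Rightarrow> 'r \<Rightarrow> 'r" where
  "dpoly_eval \<delta> P v = (\<Sum>m\<in>Poly_Mapping.keys P. Poly_Mapping.lookup P m * (\<Prod>i\<in>Poly_Mapping.keys (m :: nat \<Rightarrow>\<^sub>0 nat). ((\<delta> ^^ i) v) ^ Poly_Mapping.lookup m i))"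

definition hyperalgebraic :: "'r::comm_ring_1 set \<Rightarrow> ('r \<Rightarrow> 'r) \<Rightarrow> 'r \<Rightarrow> bool" where
  "hyperalgebraic K \<delta> v \<longleftrightarrow> (\<exists>P :: 'r dpoly. P \<noteq> 0 \<and> (\<forall>m. Poly_Mapping.lookup P m \<in> K) \<and> dpoly_eval \<delta> P v = 0)"

definition linear_telescoper :: "'r::comm_ring_1 set \<Rightarrow> 'r set \<Rightarrow> ('r \<Rightarrow> 'r) \<Rightarrow> ('r \<Rightarrow> 'r) \<Rightarrow> 'r \<Rightarrow> bool" where
  "linear_telescoper k K \<phi> \<delta> g \<longleftrightarrow> (\<exists>(n::nat) (c::nat \<Rightarrow> 'r). (\<forall>i\<le>n. c i \<in> k) \<and> (\<exists>i\<le>n. c i \<noteq> 0)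
      \<and> (\<exists>f\<in>K. (\<Sum>i\<le>n. c i * (\<delta> ^^ i) g) = \<phi> f - f))"

end

theory Submission
  imports Defs
begin

text \<open>In case (i) put \<open>z i = \<delta>\<^sup>i v\<close> and \<open>b i = \<delta>\<^sup>i b\<close>; in case (ii) put \<open>z i = \<delta>\<^sup>i u\<close> with
  \<open>u = \<delta>v / v\<close> and \<open>b i = \<delta>\<^sup>i (\<delta>a / a)\<close>. In both cases \<open>\<phi> (z i) = z i + b i\<close>, and a differential
  relation for \<open>v\<close> becomes a nontrivial relation \<open>\<Sum> c(k,m) v\<^sup>k z\<^sup>m = 0\<close> over \<open>K\<close> (with \<open>k = 0\<close>
  only, in case (i)). Choose one of minimal degree \<open>d\<close> in \<open>z\<close>, then with fewest monomials of degree
  \<open>d\<close>, normalised by \<open>c(k0,m0) = 1\<close>. Applying \<open>\<phi>\<close>, dividing by \<open>a\<^sup>k\<^sup>0\<close> and subtracting the relation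
  yields a relation with fewer monomials of degree \<open>d\<close>, which must therefore be trivial. Its
  coefficients of degree \<open>d\<close> show that the top coefficients are twisted \<open>\<phi>\<close>-constants. If \<open>d > 0\<close>,
  its coefficient at \<open>z\<^sup>m\<^sup>0 / z i\<close> is an identity \<open>\<Sum>j. c j * b j = \<phi> f - f\<close> with \<open>\<phi>\<close>-constant \<open>c j\<close>;
  if \<open>d = 0\<close>, two distinct powers of \<open>v\<close> give \<open>a\<^sup>k\<^sup>1 \<phi> e = a\<^sup>k\<^sup>0 e\<close>, whose logarithmic derivative is
  such an identity. Conversely, \<open>L(b) = \<phi> f - f\<close> makes \<open>L(z 0) - f\<close> a \<open>\<phi>\<close>-constant, hence an
  element of \<open>K\<close>; in case (ii) a power of \<open>v\<close> clears the denominators of \<open>L(u)\<close>.\<close>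

locale phi_delta_field =
  fixes K :: "'r::comm_ring_1 set" and \<phi> \<delta> :: "'r \<Rightarrow> 'r"
  assumes setting: "phi_delta_setting K \<phi> \<delta>"
begin

lemma subfield: "subfield_of K" using setting by (simp add: phi_delta_setting_def)
lemma K_0[simp]: "0 \<in> K" using subfield by (simp add: subfield_of_def)
lemma K_1[simp]: "1 \<in> K" using subfield by (simp add: subfield_of_def)
lemma K_add[simp]: "x \<in> K \<Longrightarrow> y \<in> K \<Longrightarrow> x + y \<in> K" using subfield by (simp add: subfield_of_def)
lemma K_diff[simp]: "x \<in> K \<Longrightarrow> y \<in> K \<Longrightarrow> x - y \<in> K" using subfield by (simp add: subfield_of_def)
lemma K_mult[simp]: "x \<in> K \<Longrightarrow> y \<in> K \<Longrightarrow> x * y \<in> K" using subfield by (simp add: subfield_of_def)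
lemma K_inverse: "x \<in> K \<Longrightarrow> x \<noteq> 0 \<Longrightarrow> \<exists>y\<in>K. x * y = 1" using subfield by (simp add: subfield_of_def)
lemma K_uminus[simp]: "x \<in> K \<Longrightarrow> - x \<in> K" using K_diff[of 0 x] by simp
lemma K_power[simp]: "x \<in> K \<Longrightarrow> x ^ n \<in> K" by (induction n) auto
lemma K_sum[simp]: "(\<And>i. i \<in> S \<Longrightarrow> f i \<in> K) \<Longrightarrow> sum f S \<in> K"
  by (induction S rule: infinite_finite_induct) auto
lemma K_of_nat[simp]: "of_nat n \<in> K" by (induction n) auto

lemma of_nat_neq_0: "n > 0 \<Longrightarrow> (of_nat n :: 'r) \<noteq> 0" using setting by (simp add: phi_delta_setting_def)
lemma of_int_neq_0:
  assumes "j \<noteq> 0" shows "(of_int j :: 'r) \<noteq> 0"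
proof (cases j rule: int_cases)
  case (nonneg n)
  then show ?thesis using assms of_nat_neq_0[of n] by simp
next
  case (neg n)
  then have "of_int j = - (of_nat (Suc n) :: 'r)" by simp
  then show ?thesis using of_nat_neq_0[of "Suc n"] by (simp only: neg_equal_0_iff_equal) simp
qed

lemma automorphism: "ring_automorphism \<phi>" using setting by (simp add: phi_delta_setting_def)
lemma phi_add[simp]: "\<phi> (x + y) = \<phi> x + \<phi> y" using automorphism by (simp add: ring_automorphism_def)
lemma phi_mult[simp]: "\<phi> (x * y) = \<phi> x * \<phi> y" using automorphism by (simp add: ring_automorphism_def)
lemma phi_1[simp]: "\<phi> 1 = 1" using automorphism by (simp add: ring_automorphism_def)
lemma phi_0[simp]: "\<phi> 0 = 0" using phi_add[of 0 0] by simp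
lemma phi_uminus[simp]: "\<phi> (- x) = - \<phi> x" using phi_add[of x "-x"] minus_unique[of "\<phi> x" "\<phi> (-x)"] by simp
lemma phi_diff[simp]: "\<phi> (x - y) = \<phi> x - \<phi> y" using phi_add[of x "-y"] by simp
lemma phi_power[simp]: "\<phi> (x ^ n) = \<phi> x ^ n" by (induction n) auto
lemma phi_sum: "\<phi> (sum f S) = (\<Sum>i\<in>S. \<phi> (f i))" by (induction S rule: infinite_finite_induct) auto
lemma phi_prod: "\<phi> (prod f S) = (\<Prod>i\<in>S. \<phi> (f i))" by (induction S rule: infinite_finite_induct) auto
lemma phi_of_nat[simp]: "\<phi> (of_nat n) = of_nat n" by (induction n) auto
lemma phi_K[simp]: "x \<in> K \<Longrightarrow> \<phi> x \<in> K" using setting by (auto simp: phi_delta_setting_def)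
lemma phi_inj: "\<phi> x = \<phi> y \<Longrightarrow> x = y" using automorphism by (auto simp: ring_automorphism_def bij_def inj_def)

lemma derivation_delta: "derivation \<delta>" using setting by (simp add: phi_delta_setting_def)
lemma delta_add[simp]: "\<delta> (x + y) = \<delta> x + \<delta> y" using derivation_delta by (simp add: derivation_def)
lemma delta_mult: "\<delta> (x * y) = x * \<delta> y + \<delta> x * y" using derivation_delta by (simp add: derivation_def)
lemma delta_0[simp]: "\<delta> 0 = 0" using delta_add[of 0 0] by simp
lemma delta_1[simp]: "\<delta> 1 = 0" using delta_mult[of 1 1] by simp
lemma delta_uminus[simp]: "\<delta> (- x) = - \<delta> x" using delta_add[of x "-x"] minus_unique[of "\<delta> x" "\<delta> (-x)"] by simp
lemma delta_diff[simp]: "\<delta> (x - y) = \<delta> x - \<delta> y" using delta_add[of x "-y"] by simp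
lemma delta_K[simp]: "x \<in> K \<Longrightarrow> \<delta> x \<in> K" using setting by (auto simp: phi_delta_setting_def)
lemma phi_delta: "\<phi> (\<delta> x) = \<delta> (\<phi> x)" using setting by (auto simp: phi_delta_setting_def)

lemma delta_iter_add[simp]: "(\<delta>^^i) (x + y) = (\<delta>^^i) x + (\<delta>^^i) y" by (induction i) auto
lemma delta_iter_K[simp]: "x \<in> K \<Longrightarrow> (\<delta>^^i) x \<in> K" by (induction i) auto
lemma phi_delta_iter: "\<phi> ((\<delta>^^i) x) = (\<delta>^^i) (\<phi> x)" by (induction i) (auto simp: phi_delta)

lemma delta_power: "x * xi = 1 \<Longrightarrow> \<delta> (x ^ n) = of_nat n * (\<delta> x * xi) * x ^ n"
proof (induction n)
  case (Suc n)
  have e: "x ^ n = xi * x ^ Suc n" using Suc.prems by (simp add: mult.assoc[symmetric] mult.commute[of xi x])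
  have e2: "\<delta> x * x ^ n = (\<delta> x * xi) * x ^ Suc n" by (metis e mult.assoc)
  have "\<delta> (x ^ Suc n) = x * \<delta> (x^n) + \<delta> x * x ^ n" by (simp only: power_Suc delta_mult)
  also have "\<dots> = x * (of_nat n * (\<delta> x * xi) * x ^ n) + (\<delta> x * xi) * x ^ Suc n" by (simp only: e2 Suc.IH[OF Suc.prems])
  also have "\<dots> = (of_nat n + 1) * (\<delta> x * xi) * x ^ Suc n" by (simp add: algebra_simps)
  finally show ?case by (simp only: of_nat_Suc add.commute)
qed simp

end

section \<open>Linear combinations as lists\<close>

definition lc_eval :: "('k \<Rightarrow> 'r::comm_ring_1) \<Rightarrow> ('k \<times> 'r) list \<Rightarrow> 'r" where
  "lc_eval val xs = sum_list (map (\<lambda>(k,c). c * val k) xs)"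
definition lc_coeff :: "('k \<times> 'r::comm_ring_1) list \<Rightarrow> 'k \<Rightarrow> 'r" where
  "lc_coeff xs k = sum_list (map snd (filter (\<lambda>p. fst p = k) xs))"

lemma lc_eval_Nil[simp]: "lc_eval val [] = 0" by (simp add: lc_eval_def)
lemma lc_eval_Cons[simp]: "lc_eval val ((k,c)#xs) = c * val k + lc_eval val xs" by (simp add: lc_eval_def)
lemma lc_eval_append[simp]: "lc_eval val (xs @ ys) = lc_eval val xs + lc_eval val ys" by (simp add: lc_eval_def)
lemma lc_coeff_Nil[simp]: "lc_coeff [] k = 0" by (simp add: lc_coeff_def)
lemma lc_coeff_Cons[simp]: "lc_coeff ((k',c)#xs) k = (if k' = k then c else 0) + lc_coeff xs k" by (simp add: lc_coeff_def)
lemma lc_coeff_append[simp]: "lc_coeff (xs @ ys) k = lc_coeff xs k + lc_coeff ys k" by (simp add: lc_coeff_def)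

lemma lc_coeff_notin: "k \<notin> fst ` set xs \<Longrightarrow> lc_coeff xs k = 0"
  by (induction xs) (auto simp: lc_coeff_def)

lemma lc_eval_eq_sum_coeff: "finite U \<Longrightarrow> fst ` set xs \<subseteq> U \<Longrightarrow> lc_eval val xs = (\<Sum>k\<in>U. lc_coeff xs k * val k)"
proof (induction xs)
  case (Cons p xs)
  obtain k' c where p: "p = (k',c)" by force
  have "k' \<in> U" using Cons.prems p by auto
  have "lc_eval val (p#xs) = c * val k' + (\<Sum>k\<in>U. lc_coeff xs k * val k)" using Cons p by auto
  also have "c * val k' = (\<Sum>k\<in>U. (if k' = k then c else 0) * val k)"
  proof -
    have "(\<Sum>k\<in>U. (if k' = k then c else 0) * val k) = (\<Sum>k\<in>U. if k' = k then c * val k' else 0)"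
      by (rule sum.cong) auto
    then show ?thesis using \<open>k' \<in> U\<close> Cons.prems(1) by (simp add: sum.delta)
  qed
  finally show ?case using p by (simp add: sum.distrib distrib_right)
qed simp

lemma lc_eval_scale: "lc_eval val (map (\<lambda>(k,c). (k, s*c)) xs) = s * lc_eval val xs"
  by (induction xs) (auto simp: algebra_simps)
lemma lc_coeff_scale: "lc_coeff (map (\<lambda>(k,c). (k, s*c)) xs) k = s * lc_coeff xs k"
  by (induction xs) (auto simp: algebra_simps)

lemma lc_eval_uminus: "lc_eval val (map (\<lambda>(k,c). (k, - c)) xs) = - lc_eval val xs"
  by (induction xs) auto
lemma lc_coeff_uminus: "lc_coeff (map (\<lambda>(k,c). (k, - c)) xs) k = - lc_coeff xs k"
  by (induction xs) auto

lemma lc_eval_map_pair: "distinct ks \<Longrightarrow> lc_eval val (map (\<lambda>k. (k, f k)) ks) = (\<Sum>k\<in>set ks. f k * val k)"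
  by (induction ks) auto
lemma lc_coeff_map_pair: "distinct ks \<Longrightarrow> lc_coeff (map (\<lambda>k. (k, f k)) ks) k = (if k \<in> set ks then f k else 0)"
  by (induction ks) auto

lemma lc_coeff_filter: "lc_coeff (filter (\<lambda>p. P (fst p)) xs) k = (if P k then lc_coeff xs k else 0)"
  by (induction xs) auto

lemma lc_eval_map: "distinct js \<Longrightarrow> lc_eval val (map (\<lambda>i. (g i, f i)) js) = (\<Sum>i\<in>set js. f i * val (g i))"
  by (induction js) auto
lemma lc_coeff_map: "distinct js \<Longrightarrow> lc_coeff (map (\<lambda>i. (g i, f i)) js) key = (\<Sum>i\<in>set js. if g i = key then f i else 0)"
  by (induction js) auto

definition lc_over :: "'r set \<Rightarrow> ('k \<Rightarrow> bool) \<Rightarrow> ('k \<times> 'r) list \<Rightarrow> bool" where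
  "lc_over K Q ys \<longleftrightarrow> (\<forall>(k,c)\<in>set ys. Q k \<and> c \<in> K)"
definition lc_span :: "'r::comm_ring_1 set \<Rightarrow> ('k \<Rightarrow> 'r) \<Rightarrow> ('k \<Rightarrow> bool) \<Rightarrow> 'r set" where
  "lc_span K val Q = {lc_eval val ys | ys. lc_over K Q ys}"

lemma lc_over_Nil[simp]: "lc_over K Q []" by (auto simp: lc_over_def)
lemma lc_over_append[simp]: "lc_over K Q (xs @ ys) \<longleftrightarrow> lc_over K Q xs \<and> lc_over K Q ys" by (auto simp: lc_over_def)

lemma finite_lc_coeff_support: "finite {k. lc_coeff xs k \<noteq> 0}"
  by (rule finite_subset[of _ "fst ` set xs"]) (auto intro: lc_coeff_notin ccontr)

lemma lc_eval_eq_sum_support: "lc_eval val xs = (\<Sum>key\<in>{k. lc_coeff xs k \<noteq> 0}. lc_coeff xs key * val key)"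
proof -
  have "lc_eval val xs = (\<Sum>key\<in>fst ` set xs. lc_coeff xs key * val key)" by (rule lc_eval_eq_sum_coeff) auto
  also have "\<dots> = (\<Sum>key\<in>{k. lc_coeff xs k \<noteq> 0}. lc_coeff xs key * val key)"
    by (rule sum.mono_neutral_right) (auto intro: lc_coeff_notin ccontr)
  finally show ?thesis .
qed

definition lc_lift :: "'a \<Rightarrow> 'r::comm_ring_1 \<Rightarrow> ('b \<times> 'r) list \<Rightarrow> (('a \<times> 'b) \<times> 'r) list" where
  "lc_lift k t ys = map (\<lambda>(m,c). ((k,m), t * c)) ys"

lemma lc_coeff_lift: "lc_coeff (lc_lift k t ys) (k',m) = (if k' = k then t * lc_coeff ys m else 0)"
  by (induction ys) (auto simp: lc_lift_def algebra_simps)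

lemma lc_over_bounded:
  assumes "lc_over K Q xs"
  obtains d where "lc_over K (\<lambda>k. Q k \<and> f k \<le> (d::nat)) xs"
proof -
  obtain d where "\<forall>x\<in>f ` fst ` set xs. x \<le> d"
    using finite_nat_set_iff_bounded_le by blast
  then show ?thesis using assms that unfolding lc_over_def by fastforce
qed

section \<open>Monomials\<close>

type_synonym monom = "nat \<Rightarrow>\<^sub>0 nat"

definition mdeg :: "monom \<Rightarrow> nat" where "mdeg m = sum (Poly_Mapping.lookup m) (Poly_Mapping.keys m)"
definition meval :: "(nat \<Rightarrow> 'r::comm_ring_1) \<Rightarrow> monom \<Rightarrow> 'r" where
  "meval x m = (\<Prod>i\<in>Poly_Mapping.keys m. x i ^ Poly_Mapping.lookup m i)"
abbreviation mvar :: "nat \<Rightarrow> monom" where "mvar i \<equiv> Poly_Mapping.single i 1"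

lemma mdeg_superset: "finite S \<Longrightarrow> Poly_Mapping.keys m \<subseteq> S \<Longrightarrow> mdeg m = (\<Sum>i\<in>S. Poly_Mapping.lookup m i)"
  unfolding mdeg_def by (rule sum.mono_neutral_left) (auto simp: in_keys_iff)
lemma meval_superset: "finite S \<Longrightarrow> Poly_Mapping.keys m \<subseteq> S \<Longrightarrow> meval x m = (\<Prod>i\<in>S. x i ^ Poly_Mapping.lookup m i)"
  unfolding meval_def by (rule prod.mono_neutral_left) (auto simp: in_keys_iff)

lemma keys_add_subset: "Poly_Mapping.keys (m + n) \<subseteq> Poly_Mapping.keys m \<union> Poly_Mapping.keys (n::monom)"
  by (auto simp: in_keys_iff lookup_add)

lemma mdeg_add[simp]: "mdeg (m + n) = mdeg m + mdeg n"
proof -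
  let ?S = "Poly_Mapping.keys m \<union> Poly_Mapping.keys n"
  have "mdeg (m+n) = (\<Sum>i\<in>?S. Poly_Mapping.lookup (m+n) i)" using keys_add_subset by (intro mdeg_superset) auto
  also have "\<dots> = (\<Sum>i\<in>?S. Poly_Mapping.lookup m i) + (\<Sum>i\<in>?S. Poly_Mapping.lookup n i)" by (simp add: lookup_add sum.distrib)
  also have "\<dots> = mdeg m + mdeg n" by (subst (1 2) mdeg_superset[of ?S]) auto
  finally show ?thesis .
qed

lemma meval_add: "meval x (m + n) = meval x m * meval x n"
proof -
  let ?S = "Poly_Mapping.keys m \<union> Poly_Mapping.keys n"
  have "meval x (m+n) = (\<Prod>i\<in>?S. x i ^ Poly_Mapping.lookup (m+n) i)" using keys_add_subset by (intro meval_superset) auto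
  also have "\<dots> = (\<Prod>i\<in>?S. x i ^ Poly_Mapping.lookup m i) * (\<Prod>i\<in>?S. x i ^ Poly_Mapping.lookup n i)" by (simp add: lookup_add power_add prod.distrib)
  also have "\<dots> = meval x m * meval x n" by (subst (1 2) meval_superset[of ?S]) auto
  finally show ?thesis .
qed

lemma mdeg_0[simp]: "mdeg 0 = 0" by (simp add: mdeg_def)
lemma meval_0[simp]: "meval x 0 = 1" by (simp add: meval_def)
lemma mdeg_single[simp]: "mdeg (Poly_Mapping.single i n) = n" by (simp add: mdeg_def)
lemma meval_single[simp]: "meval x (Poly_Mapping.single i n) = x i ^ n" by (simp add: meval_def)
lemma mdeg_eq0: "mdeg m = 0 \<longleftrightarrow> m = 0"
  by (auto simp: mdeg_def in_keys_iff poly_mapping_eq_iff fun_eq_iff)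

lemma minus_mvar_add: "i \<in> Poly_Mapping.keys m \<Longrightarrow> (m - mvar i) + mvar i = m"
  by (rule poly_mapping_eqI) (auto simp: lookup_add lookup_minus lookup_single in_keys_iff when_def)
lemma add_mvar_minus: "(m + mvar i) - mvar i = m"
  by (rule poly_mapping_eqI) (auto simp: lookup_add lookup_minus lookup_single when_def)
lemma mdeg_minus_mvar: "i \<in> Poly_Mapping.keys m \<Longrightarrow> mdeg m = mdeg (m - mvar i) + 1"
  by (metis minus_mvar_add mdeg_add mdeg_single)

lemma single_Suc_0_eq_iff[simp]:
  "Poly_Mapping.single (x::nat) (Suc 0) = Poly_Mapping.single i (Suc 0) \<longleftrightarrow> x = i"
  by (metis lookup_single_eq lookup_single_not_eq Suc_neq_Zero)

lemma single_Suc_0_neq_0[simp]: "Poly_Mapping.single (i::nat) (Suc 0) \<noteq> 0"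
  by (metis lookup_single_eq lookup_zero Suc_neq_Zero)

context phi_delta_field begin

lemma lc_coeff_in_K: "lc_over K Q xs \<Longrightarrow> lc_coeff xs k \<in> K"
  by (induction xs) (auto simp: lc_over_def)

lemma lc_span_0[simp]: "0 \<in> lc_span K val Q" by (auto simp: lc_span_def intro!: exI[of _ "[]"])
lemma lc_span_add: "x \<in> lc_span K val Q \<Longrightarrow> y \<in> lc_span K val Q \<Longrightarrow> x + y \<in> lc_span K val Q"
  by (auto simp: lc_span_def) (metis lc_over_append lc_eval_append)
lemma lc_span_scale: "s \<in> K \<Longrightarrow> x \<in> lc_span K val Q \<Longrightarrow> s * x \<in> lc_span K val Q"
proof -
  assume s: "s \<in> K" and "x \<in> lc_span K val Q"
  then obtain ys where ys: "lc_over K Q ys" "x = lc_eval val ys" by (auto simp: lc_span_def)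
  have "lc_over K Q (map (\<lambda>(k,c). (k, s*c)) ys)" using ys s by (auto simp: lc_over_def)
  then show ?thesis using ys lc_eval_scale[of val s ys] unfolding lc_span_def by (metis (mono_tags, lifting) mem_Collect_eq)
qed
lemma lc_span_single: "Q k \<Longrightarrow> c \<in> K \<Longrightarrow> c * val k \<in> lc_span K val Q"
  by (auto simp: lc_span_def lc_over_def intro!: exI[of _ "[(k,c)]"])
lemma lc_span_sum: "(\<And>i. i \<in> I \<Longrightarrow> f i \<in> lc_span K val Q) \<Longrightarrow> sum f I \<in> lc_span K val Q"
  by (induction I rule: infinite_finite_induct) (auto intro: lc_span_add)
lemma lc_span_mono: "x \<in> lc_span K val Q \<Longrightarrow> (\<And>k. Q k \<Longrightarrow> Q' k) \<Longrightarrow> x \<in> lc_span K val Q'"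
  unfolding lc_span_def lc_over_def by fastforce
lemma lc_span_mult_var: "x \<in> lc_span K (meval z) Q \<Longrightarrow> (\<And>m. Q m \<Longrightarrow> Q' (m + mvar j)) \<Longrightarrow> x * z j \<in> lc_span K (meval z) Q'"
proof -
  assume "x \<in> lc_span K (meval z) Q" and QQ: "\<And>m. Q m \<Longrightarrow> Q' (m + mvar j)"
  then obtain ys where ys: "lc_over K Q ys" "x = lc_eval (meval z) ys" by (auto simp: lc_span_def)
  let ?ys = "map (\<lambda>(m,c). (m + mvar j, c)) ys"
  have "lc_over K Q' ?ys" using ys QQ by (auto simp: lc_over_def)
  moreover have "lc_eval (meval z) ?ys = lc_eval (meval z) ys * z j"
    by (induction ys) (auto simp: meval_add algebra_simps)
  ultimately show ?thesis using ys unfolding lc_span_def by (metis (mono_tags, lifting) mem_Collect_eq)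
qed

end

section \<open>Applying \<open>\<phi>\<close> to monomials in shifted elements\<close>

locale additive_shift = phi_delta_field K \<phi> \<delta> for K :: "'r::comm_ring_1 set" and \<phi> \<delta> +
  fixes z b :: "nat \<Rightarrow> 'r"
  assumes b_K: "b i \<in> K" and phi_z: "\<phi> (z i) = z i + b i"
begin

definition shift_linear_part :: "monom \<Rightarrow> 'r" where
  "shift_linear_part m = (\<Sum>i\<in>Poly_Mapping.keys m. of_nat (Poly_Mapping.lookup m i) * b i * meval z (m - mvar i))"

lemma shift_linear_part_superset: "finite S \<Longrightarrow> Poly_Mapping.keys m \<subseteq> S \<Longrightarrow>
   shift_linear_part m = (\<Sum>i\<in>S. of_nat (Poly_Mapping.lookup m i) * b i * meval z (m - mvar i))"
  unfolding shift_linear_part_def by (rule sum.mono_neutral_left) (auto simp: in_keys_iff)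

lemma shift_linear_part_term_add_mvar:
  "of_nat (Poly_Mapping.lookup (m + mvar j) i) * b i * meval z (m + mvar j - mvar i)
    = of_nat (Poly_Mapping.lookup m i) * b i * meval z (m - mvar i) * z j
      + (if i = j then b j * meval z m else 0)"
proof (cases "i = j")
  case True
  show ?thesis
  proof (cases "i \<in> Poly_Mapping.keys m")
    case False
    then show ?thesis using True by (simp add: add_mvar_minus lookup_add in_keys_iff)
  next
    case keys: True
    have split: "meval z m = meval z (m - mvar j) * z j"
      using minus_mvar_add[OF keys] meval_add[of z "m - mvar i" "mvar i"] True by simp
    have "of_nat (Poly_Mapping.lookup (m + mvar j) i) * b i * meval z (m + mvar j - mvar i)
        = (of_nat (Poly_Mapping.lookup m j) + 1) * b j * meval z m"
      using True by (simp add: add_mvar_minus lookup_add add.commute)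
    also have "\<dots> = of_nat (Poly_Mapping.lookup m j) * b j * meval z (m - mvar j) * z j + b j * meval z m"
      by (simp add: split algebra_simps)
    finally show ?thesis using True by simp
  qed
next
  case False
  show ?thesis
  proof (cases "i \<in> Poly_Mapping.keys m")
    case False
    then show ?thesis using \<open>i \<noteq> j\<close> by (simp add: lookup_add in_keys_iff lookup_single)
  next
    case True
    have "m + mvar j - mvar i = (m - mvar i) + mvar j"
      by (rule poly_mapping_eqI) (use True False in \<open>auto simp: lookup_add lookup_minus lookup_single in_keys_iff when_def\<close>)
    then show ?thesis using False by (simp add: meval_add lookup_add lookup_single mult.assoc)
  qed
qed

lemma shift_linear_part_add_mvar:
  "shift_linear_part (m + mvar j) = b j * meval z m + shift_linear_part m * z j"
proof -
  let ?S = "insert j (Poly_Mapping.keys m)"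
  have keys: "Poly_Mapping.keys (m + mvar j) \<subseteq> ?S" "Poly_Mapping.keys m \<subseteq> ?S"
    using keys_add_subset[of m "mvar j"] by auto
  have "shift_linear_part (m + mvar j) = (\<Sum>i\<in>?S. of_nat (Poly_Mapping.lookup (m + mvar j) i) * b i
      * meval z (m + mvar j - mvar i))"
    using keys(1) by (intro shift_linear_part_superset) auto
  also have "\<dots> = (\<Sum>i\<in>?S. of_nat (Poly_Mapping.lookup m i) * b i * meval z (m - mvar i) * z j
      + (if i = j then b j * meval z m else 0))"
    by (simp only: shift_linear_part_term_add_mvar)
  also have "\<dots> = shift_linear_part m * z j + b j * meval z m"
    using keys(2) by (simp add: sum.distrib sum_distrib_right shift_linear_part_superset[of ?S])
  finally show ?thesis by (simp add: add.commute)
qed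

lemma phi_meval_expansion:
  "\<phi> (meval z m) - meval z m - shift_linear_part m \<in> lc_span K (meval z) (\<lambda>m'. mdeg m' + 2 \<le> mdeg m)"
proof (induction "mdeg m" arbitrary: m)
  case 0
  then have "m = 0" by (simp add: mdeg_eq0[symmetric])
  then show ?case by (simp add: shift_linear_part_def)
next
  case (Suc n)
  then have "m \<noteq> 0" by auto
  then obtain j where j: "j \<in> Poly_Mapping.keys m" by (metis keys_eq_empty ex_in_conv)
  define m' where "m' = m - mvar j"
  have mm: "m = m' + mvar j" using minus_mvar_add[OF j] m'_def by simp
  have dm': "mdeg m' = n" using Suc.hyps(2)[symmetric] mm by simp
  define r where "r = \<phi> (meval z m') - meval z m' - shift_linear_part m'"
  have r: "r \<in> lc_span K (meval z) (\<lambda>m''. mdeg m'' + 2 \<le> n)" using Suc.hyps(1)[OF dm'[symmetric]] dm' r_def by simp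
  have phm: "\<phi> (meval z m) = \<phi> (meval z m') * (z j + b j)"
    using mm by (simp add: meval_add phi_z)
  have Dmj: "shift_linear_part m = b j * meval z m' + shift_linear_part m' * z j"
    using mm shift_linear_part_add_mvar by simp
  have eq: "\<phi> (meval z m) - meval z m - shift_linear_part m = shift_linear_part m' * b j + r * z j + r * b j"
    unfolding phm Dmj r_def using mm by (simp add: meval_add algebra_simps)
  have A: "shift_linear_part m' * b j \<in> lc_span K (meval z) (\<lambda>m'. mdeg m' + 2 \<le> mdeg m)"
    unfolding shift_linear_part_def sum_distrib_right
  proof (rule lc_span_sum)
    fix i assume i: "i \<in> Poly_Mapping.keys m'"
    have eq: "of_nat (Poly_Mapping.lookup m' i) * b i * meval z (m' - mvar i) * b j
          = (of_nat (Poly_Mapping.lookup m' i) * b i * b j) * meval z (m' - mvar i)" by (simp add: algebra_simps)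
    have dg: "mdeg (m' - mvar i) + 2 \<le> mdeg m" using mdeg_minus_mvar[OF i] dm' Suc.hyps(2)[symmetric] by simp
    show "of_nat (Poly_Mapping.lookup m' i) * b i * meval z (m' - mvar i) * b j \<in> lc_span K (meval z) (\<lambda>m'. mdeg m' + 2 \<le> mdeg m)"
      unfolding eq by (rule lc_span_single) (use dg b_K in auto)
  qed
  have B: "r * z j \<in> lc_span K (meval z) (\<lambda>m'. mdeg m' + 2 \<le> mdeg m)"
    by (rule lc_span_mult_var[OF r]) (use Suc.hyps(2)[symmetric] in simp)
  have C: "r * b j \<in> lc_span K (meval z) (\<lambda>m'. mdeg m' + 2 \<le> mdeg m)"
    by (rule lc_span_mono[OF lc_span_scale[OF b_K r, of j, unfolded mult.commute[of "b j"]]]) (use Suc.hyps(2)[symmetric] in simp)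
  show ?case unfolding eq using A B C by (intro lc_span_add)
qed

definition shift_remainder :: "monom \<Rightarrow> (monom \<times> 'r) list" where
  "shift_remainder m = (SOME ys. lc_over K (\<lambda>m'. mdeg m' + 2 \<le> mdeg m) ys
      \<and> lc_eval (meval z) ys = \<phi> (meval z m) - meval z m - shift_linear_part m)"

lemma shift_remainder:
  "lc_over K (\<lambda>m'. mdeg m' + 2 \<le> mdeg m) (shift_remainder m)"
  "lc_eval (meval z) (shift_remainder m) = \<phi> (meval z m) - meval z m - shift_linear_part m"
proof -
  have "\<exists>ys. lc_over K (\<lambda>m'. mdeg m' + 2 \<le> mdeg m) ys
      \<and> lc_eval (meval z) ys = \<phi> (meval z m) - meval z m - shift_linear_part m"
    using phi_meval_expansion[of m] by (auto simp: lc_span_def)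
  from someI_ex[OF this] show "lc_over K (\<lambda>m'. mdeg m' + 2 \<le> mdeg m) (shift_remainder m)"
    "lc_eval (meval z) (shift_remainder m) = \<phi> (meval z m) - meval z m - shift_linear_part m"
    unfolding shift_remainder_def by blast+
qed

definition phi_meval_list :: "monom \<Rightarrow> (monom \<times> 'r) list" where
  "phi_meval_list m = (m, 1) # map (\<lambda>i. (m - mvar i, of_nat (Poly_Mapping.lookup m i) * b i))
      (sorted_list_of_set (Poly_Mapping.keys m)) @ shift_remainder m"

lemma lc_eval_phi_meval_list: "lc_eval (meval z) (phi_meval_list m) = \<phi> (meval z m)"
proof -
  have "lc_eval (meval z) (map (\<lambda>i. (m - mvar i, of_nat (Poly_Mapping.lookup m i) * b i))
      (sorted_list_of_set (Poly_Mapping.keys m))) = shift_linear_part m"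
    by (simp add: lc_eval_map shift_linear_part_def)
  then show ?thesis unfolding phi_meval_list_def using shift_remainder(2)[of m] by simp
qed

lemma lc_over_phi_meval_list: "lc_over K (\<lambda>m'. mdeg m' \<le> mdeg m) (phi_meval_list m)"
  using shift_remainder(1)[of m] mdeg_minus_mvar b_K by (fastforce simp: lc_over_def phi_meval_list_def)

lemma lc_coeff_phi_meval_list_top:
  assumes "mdeg m \<le> mdeg \<mu>"
  shows "lc_coeff (phi_meval_list m) \<mu> = (if m = \<mu> then 1 else 0)"
proof -
  have "lc_coeff (map (\<lambda>i. (m - mvar i, of_nat (Poly_Mapping.lookup m i) * b i))
      (sorted_list_of_set (Poly_Mapping.keys m))) \<mu> = 0"
    using assms mdeg_minus_mvar by (intro lc_coeff_notin) fastforce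
  moreover have "lc_coeff (shift_remainder m) \<mu> = 0"
    using assms shift_remainder(1)[of m] by (intro lc_coeff_notin) (fastforce simp: lc_over_def)
  ultimately show ?thesis by (simp add: phi_meval_list_def)
qed

lemma lc_coeff_phi_meval_list_subtop:
  assumes deg: "mdeg m = mdeg \<mu> + 1" and N: "Poly_Mapping.keys m \<subseteq> {..N}"
  shows "lc_coeff (phi_meval_list m) \<mu>
    = (\<Sum>i\<le>N. if m = \<mu> + mvar i then of_nat (Poly_Mapping.lookup \<mu> i + 1) * b i else 0)"
proof -
  have rem: "lc_coeff (shift_remainder m) \<mu> = 0"
    using deg shift_remainder(1)[of m] by (intro lc_coeff_notin) (fastforce simp: lc_over_def)
  have "lc_coeff (map (\<lambda>i. (m - mvar i, of_nat (Poly_Mapping.lookup m i) * b i))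
      (sorted_list_of_set (Poly_Mapping.keys m))) \<mu>
    = (\<Sum>i\<in>Poly_Mapping.keys m. if m - mvar i = \<mu> then of_nat (Poly_Mapping.lookup m i) * b i else 0)"
    by (simp add: lc_coeff_map)
  also have "\<dots> = (\<Sum>i\<le>N. if m = \<mu> + mvar i then of_nat (Poly_Mapping.lookup \<mu> i + 1) * b i else 0)"
  proof (rule sum.mono_neutral_cong_left[OF _ N])
    show "\<forall>i\<in>{..N} - Poly_Mapping.keys m.
        (if m = \<mu> + mvar i then of_nat (Poly_Mapping.lookup \<mu> i + 1) * b i else 0) = 0"
      by (auto simp: in_keys_iff lookup_add)
    fix i assume i: "i \<in> Poly_Mapping.keys m"
    have "m - mvar i = \<mu> \<longleftrightarrow> m = \<mu> + mvar i"
      using minus_mvar_add[OF i] add_mvar_minus[of \<mu> i] by auto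
    then show "(if m - mvar i = \<mu> then of_nat (Poly_Mapping.lookup m i) * b i else 0)
        = (if m = \<mu> + mvar i then of_nat (Poly_Mapping.lookup \<mu> i + 1) * b i else 0)"
      by (auto simp: lookup_add)
  qed simp
  moreover have "m \<noteq> \<mu>" using deg by auto
  ultimately show ?thesis using rem by (simp add: phi_meval_list_def)
qed

lemma lc_coeff_phi_meval_list_near_top:
  assumes "mdeg m \<le> mdeg \<mu> + 1" and "Poly_Mapping.keys m \<subseteq> {..N}"
  shows "lc_coeff (phi_meval_list m) \<mu> = (if m = \<mu> then 1 else 0)
    + (\<Sum>i\<le>N. if m = \<mu> + mvar i then of_nat (Poly_Mapping.lookup \<mu> i + 1) * b i else 0)"
proof (cases "mdeg m = mdeg \<mu> + 1")
  case True
  then show ?thesis using lc_coeff_phi_meval_list_subtop[OF True assms(2)] by auto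
next
  case False
  then have "m \<noteq> \<mu> + mvar i" for i by auto
  then show ?thesis using False assms(1) by (simp add: lc_coeff_phi_meval_list_top)
qed

end

section \<open>Minimal relations\<close>

definition top_keys :: "nat \<Rightarrow> ((nat \<times> monom) \<times> 'r::comm_ring_1) list \<Rightarrow> (nat \<times> monom) set" where
  "top_keys d xs = {key. mdeg (snd key) = d \<and> lc_coeff xs key \<noteq> 0}"

definition sequence_telescoper :: "'r::comm_ring_1 set \<Rightarrow> ('r \<Rightarrow> 'r) \<Rightarrow> (nat \<Rightarrow> 'r) \<Rightarrow> bool" where
  "sequence_telescoper K \<phi> b \<longleftrightarrow> (\<exists>N c. (\<forall>i\<le>N. c i \<in> K \<and> \<phi> (c i) = c i) \<and> (\<exists>i\<le>N. c i \<noteq> 0)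
      \<and> (\<exists>f\<in>K. (\<Sum>i\<le>N. c i * b i) = \<phi> f - f))"

lemma linear_telescoper_iff:
  "linear_telescoper (const_field K \<phi>) K \<phi> \<delta> g \<longleftrightarrow> sequence_telescoper K \<phi> (\<lambda>i. (\<delta>^^i) g)"
  unfolding linear_telescoper_def sequence_telescoper_def const_field_def by blast

text \<open>Relations among the \<open>V\<^sup>k z\<^sup>m\<close> with \<open>k \<in> A\<close>, where \<open>\<phi> V = \<alpha> V\<close> and \<open>\<phi> (z i) = z i + b i\<close>.
  Case (i) is \<open>V = 1\<close>, \<open>A = {0}\<close>; case (ii) is \<open>V = v\<close>, \<open>z i = \<delta>\<^sup>i (\<delta>v/v)\<close>.\<close>
locale eigen_shift = additive_shift K \<phi> \<delta> z b for K :: "'r::comm_ring_1 set" and \<phi> \<delta> z b +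
  fixes V Vi \<alpha> ai :: 'r and A :: "nat set"
  assumes \<alpha>K: "\<alpha> \<in> K" and aiK: "ai \<in> K" and \<alpha>ai: "\<alpha> * ai = 1"
    and V_Vi: "V * Vi = 1" and phi_V: "\<phi> V = \<alpha> * V"
begin

definition mixed_eval :: "nat \<times> monom \<Rightarrow> 'r" where "mixed_eval key = V ^ fst key * meval z (snd key)"

definition mixed_relation :: "nat \<Rightarrow> ((nat \<times> monom) \<times> 'r) list \<Rightarrow> bool" where
  "mixed_relation d xs \<longleftrightarrow> lc_over K (\<lambda>(k,m). k \<in> A \<and> mdeg m \<le> d) xs \<and> lc_eval mixed_eval xs = 0
      \<and> (\<exists>key. lc_coeff xs key \<noteq> 0)"

lemma lc_eval_lift: "lc_eval mixed_eval (lc_lift k t ys) = t * V^k * lc_eval (meval z) ys"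
  by (induction ys) (auto simp: lc_lift_def mixed_eval_def algebra_simps)

lemma phi_mixed_eval: "\<phi> (mixed_eval (k,m)) = \<alpha>^k * V^k * \<phi> (meval z m)"
  by (simp add: mixed_eval_def phi_V power_mult_distrib)

lemma V_power_nonzero: "V ^ k \<noteq> 0"
proof
  assume "V^k = 0"
  then have "V^k * Vi^k = 0" by simp
  moreover have "V^k * Vi^k = 1" using V_Vi by (simp add: power_mult_distrib[symmetric])
  ultimately show False by simp
qed

definition twisted_image :: "'r \<Rightarrow> ((nat \<times> monom) \<times> 'r) list \<Rightarrow> ((nat \<times> monom) \<times> 'r) list" where
  "twisted_image s xs = concat (map (\<lambda>((k,m),c). lc_lift k (s * \<alpha>^k * \<phi> c) (phi_meval_list m)) xs)"

lemma lc_eval_twisted_image: "lc_eval mixed_eval (twisted_image s xs) = s * \<phi> (lc_eval mixed_eval xs)"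
  by (induction xs) (auto simp: twisted_image_def lc_eval_lift lc_eval_phi_meval_list phi_mixed_eval algebra_simps)

lemma lc_over_twisted_image:
  assumes "s \<in> K" and "lc_over K (\<lambda>(k,m). k \<in> A \<and> mdeg m \<le> d) xs"
  shows "lc_over K (\<lambda>(k,m). k \<in> A \<and> mdeg m \<le> d) (twisted_image s xs)"
  using assms lc_over_phi_meval_list \<alpha>K
  by (fastforce simp: twisted_image_def lc_over_def lc_lift_def)

lemma lc_coeff_twisted_image_top:
  assumes "\<forall>((k,m),c)\<in>set xs. mdeg m \<le> mdeg \<mu>"
  shows "lc_coeff (twisted_image s xs) (k',\<mu>) = s * \<alpha>^k' * \<phi> (lc_coeff xs (k',\<mu>))"
  using assms
  by (induction xs) (auto simp: twisted_image_def lc_coeff_lift lc_coeff_phi_meval_list_top algebra_simps)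

lemma lc_coeff_twisted_image_subtop:
  assumes "\<forall>((k,m),c)\<in>set xs. mdeg m \<le> mdeg \<mu> + 1 \<and> Poly_Mapping.keys m \<subseteq> {..N}"
  shows "lc_coeff (twisted_image s xs) (k',\<mu>) = s * \<alpha>^k' * (\<phi> (lc_coeff xs (k',\<mu>))
    + (\<Sum>i\<le>N. of_nat (Poly_Mapping.lookup \<mu> i + 1) * b i * \<phi> (lc_coeff xs (k', \<mu> + mvar i))))"
  using assms
proof (induction xs)
  case (Cons p xs)
  obtain k m c where p: "p = ((k,m),c)" by (metis prod.exhaust)
  have m: "mdeg m \<le> mdeg \<mu> + 1" "Poly_Mapping.keys m \<subseteq> {..N}" using Cons.prems p by auto
  have "lc_coeff (lc_lift k (s * \<alpha>^k * \<phi> c) (phi_meval_list m)) (k',\<mu>)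
    = s * \<alpha>^k' * (\<phi> (if (k,m) = (k',\<mu>) then c else 0)
      + (\<Sum>i\<le>N. of_nat (Poly_Mapping.lookup \<mu> i + 1) * b i * \<phi> (if (k,m) = (k', \<mu> + mvar i) then c else 0)))"
    by (cases "k = k'")
      (auto simp: lc_coeff_lift lc_coeff_phi_meval_list_near_top[OF m] algebra_simps sum_distrib_left
        intro!: sum.cong)
  then show ?case using Cons p
    by (simp add: twisted_image_def sum.distrib algebra_simps)
qed (simp add: twisted_image_def)

lemma coeffs_zero_of_top_coeffs_zero:
  assumes degree_minimal: "\<And>d' ys. d' < d \<Longrightarrow> \<not> mixed_relation d' ys"
    and ys: "lc_over K (\<lambda>(k,m). k \<in> A \<and> mdeg m \<le> d) ys" and ev: "lc_eval mixed_eval ys = 0"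
    and top: "\<And>key. mdeg (snd key) = d \<Longrightarrow> lc_coeff ys key = 0"
  shows "lc_coeff ys key = 0"
proof (rule ccontr)
  assume nz: "lc_coeff ys key \<noteq> 0"
  define ys' where "ys' = filter (\<lambda>p. mdeg (snd (fst p)) < d) ys"
  have same: "lc_coeff ys' k = lc_coeff ys k" for k
  proof -
    have "lc_coeff ys k = 0" if "\<not> mdeg (snd k) < d"
    proof (cases "mdeg (snd k) = d")
      case False
      then have "k \<notin> fst ` set ys" using that ys by (auto simp: lc_over_def)
      then show ?thesis by (rule lc_coeff_notin)
    qed (use top in simp)
    then show ?thesis unfolding ys'_def lc_coeff_filter[where P="\<lambda>k. mdeg (snd k) < d"] by auto
  qed
  have "lc_eval mixed_eval ys' = 0" using ev same by (simp add: lc_eval_eq_sum_support)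
  moreover have "lc_over K (\<lambda>(k,m). k \<in> A \<and> mdeg m \<le> d - 1) ys'"
    using ys by (auto simp: lc_over_def ys'_def)
  moreover have "d \<noteq> 0"
  proof
    assume "d = 0"
    then have "ys' = []" using ys by (induction ys) (auto simp: ys'_def lc_over_def)
    then show False using same[of key] nz by simp
  qed
  ultimately have "mixed_relation (d - 1) ys'"
    unfolding mixed_relation_def using same[of key] nz by (metis prod.exhaust)
  then show False using degree_minimal[of "d - 1"] \<open>d \<noteq> 0\<close> by simp
qed

end

locale minimal_mixed_relation = eigen_shift K \<phi> \<delta> z b V Vi \<alpha> ai A
  for K :: "'r::comm_ring_1 set" and \<phi> \<delta> z b V Vi \<alpha> ai A +
  fixes d :: nat and xs :: "((nat \<times> monom) \<times> 'r) list" and k0 :: nat and m0 :: monom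
  assumes relation: "mixed_relation d xs"
    and degree_minimal: "\<And>d' ys. d' < d \<Longrightarrow> \<not> mixed_relation d' ys"
    and top_minimal: "\<And>ys. mixed_relation d ys \<Longrightarrow> card (top_keys d xs) \<le> card (top_keys d ys)"
    and leading_degree: "mdeg m0 = d" and leading_coeff: "lc_coeff xs (k0,m0) = 1"
begin

lemma xs_lc_over: "lc_over K (\<lambda>(k,m). k \<in> A \<and> mdeg m \<le> d) xs"
  and xs_eval: "lc_eval mixed_eval xs = 0"
  using relation by (auto simp: mixed_relation_def)

text \<open>Normalising by \<open>ai\<^sup>k\<^sup>0\<close> makes the twisted image agree with the relation at \<open>(k0, m0)\<close>.\<close>
definition twisted_relation :: "((nat \<times> monom) \<times> 'r) list" where
  "twisted_relation = twisted_image (ai ^ k0) xs @ map (\<lambda>(key,c). (key, - c)) xs"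

lemma twisted_relation_lc_over: "lc_over K (\<lambda>(k,m). k \<in> A \<and> mdeg m \<le> d) twisted_relation"
proof -
  have "lc_over K (\<lambda>(k,m). k \<in> A \<and> mdeg m \<le> d) (twisted_image (ai ^ k0) xs)"
    using aiK by (intro lc_over_twisted_image[OF _ xs_lc_over]) simp
  moreover have "lc_over K (\<lambda>(k,m). k \<in> A \<and> mdeg m \<le> d) (map (\<lambda>(key,c). (key, - c)) xs)"
    using xs_lc_over by (auto simp: lc_over_def)
  ultimately show ?thesis by (simp add: twisted_relation_def)
qed

lemma twisted_relation_eval: "lc_eval mixed_eval twisted_relation = 0"
  by (simp add: twisted_relation_def lc_eval_twisted_image lc_eval_uminus xs_eval)

lemma twisted_relation_top_coeff:
  assumes "mdeg m = d"
  shows "lc_coeff twisted_relation (k,m) = ai^k0 * \<alpha>^k * \<phi> (lc_coeff xs (k,m)) - lc_coeff xs (k,m)"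
proof -
  have "\<forall>((k',m'),c)\<in>set xs. mdeg m' \<le> mdeg m" using xs_lc_over assms by (auto simp: lc_over_def)
  then show ?thesis unfolding twisted_relation_def
    by (simp add: lc_coeff_twisted_image_top lc_coeff_uminus)
qed

lemma leading_twist: "ai^k0 * \<alpha>^k0 = 1"
  using \<alpha>ai by (simp add: power_mult_distrib[symmetric] mult.commute)

text \<open>Otherwise \<open>twisted_relation\<close> would be a relation with fewer monomials of top degree.\<close>
lemma top_coeffs_twist_invariant:
  assumes "mdeg m = d"
  shows "ai^k0 * \<alpha>^k * \<phi> (lc_coeff xs (k,m)) = lc_coeff xs (k,m)"
proof (rule ccontr)
  assume ne: "ai^k0 * \<alpha>^k * \<phi> (lc_coeff xs (k,m)) \<noteq> lc_coeff xs (k,m)"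
  have "mixed_relation d twisted_relation"
  proof -
    have "lc_coeff twisted_relation (k,m) \<noteq> 0" using twisted_relation_top_coeff[OF assms] ne by simp
    then show ?thesis
      unfolding mixed_relation_def using twisted_relation_lc_over twisted_relation_eval by blast
  qed
  then have le: "card (top_keys d xs) \<le> card (top_keys d twisted_relation)" by (rule top_minimal)
  have "top_keys d twisted_relation \<subseteq> top_keys d xs - {(k0,m0)}"
  proof
    fix key assume "key \<in> top_keys d twisted_relation"
    then obtain k' m' where key: "key = (k',m')" "mdeg m' = d"
      and nz: "lc_coeff twisted_relation (k',m') \<noteq> 0" by (cases key) (auto simp: top_keys_def)
    have "lc_coeff xs (k',m') \<noteq> 0"
    proof
      assume "lc_coeff xs (k',m') = 0"
      then show False using nz twisted_relation_top_coeff[OF key(2)] by simp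
    qed
    moreover have "(k',m') \<noteq> (k0,m0)"
      using nz twisted_relation_top_coeff[of m0 k0] leading_degree leading_coeff leading_twist by auto
    ultimately show "key \<in> top_keys d xs - {(k0,m0)}" using key by (simp add: top_keys_def)
  qed
  moreover have "(k0,m0) \<in> top_keys d xs" using leading_degree leading_coeff by (simp add: top_keys_def)
  moreover have "finite (top_keys d xs)"
    unfolding top_keys_def by (rule finite_subset[OF _ finite_lc_coeff_support[of xs]]) blast
  ultimately have "card (top_keys d twisted_relation) < card (top_keys d xs)"
    by (intro psubset_card_mono) auto
  then show False using le by simp
qed

lemma twisted_relation_coeff_zero: "lc_coeff twisted_relation key = 0"
proof (rule coeffs_zero_of_top_coeffs_zero[OF degree_minimal twisted_relation_lc_over twisted_relation_eval])
  fix key' :: "nat \<times> monom" assume "mdeg (snd key') = d"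
  then show "lc_coeff twisted_relation key' = 0"
    using twisted_relation_top_coeff top_coeffs_twist_invariant by (cases key') simp
qed

lemma degree_zero_eigen_ratio:
  assumes "d = 0"
  shows "\<exists>k0 k1 e. k0 \<in> A \<and> k1 \<in> A \<and> k0 \<noteq> k1 \<and> e \<in> K \<and> e \<noteq> 0 \<and> \<alpha>^k1 * \<phi> e = \<alpha>^k0 * e"
proof -
  define S where "S = {key. lc_coeff xs key \<noteq> 0}"
  have S_keys: "fst key \<in> A \<and> snd key = 0" if "key \<in> S" for key
  proof -
    have "key \<in> fst ` set xs" using that lc_coeff_notin[of key xs] unfolding S_def by blast
    then show ?thesis using xs_lc_over assms by (auto simp: lc_over_def mdeg_eq0)
  qed
  have k0S: "(k0,m0) \<in> S" using leading_coeff by (simp add: S_def)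
  have m0: "m0 = 0" using S_keys[OF k0S] by simp
  obtain k1 m1 where k1S: "(k1,m1) \<in> S" and ne: "(k1,m1) \<noteq> (k0,m0)"
  proof (rule ccontr)
    assume "\<not> thesis"
    then have "S = {(k0,m0)}" using k0S that by auto
    then have "lc_eval mixed_eval xs = V ^ k0"
      using leading_coeff m0 by (simp add: lc_eval_eq_sum_support S_def[symmetric] mixed_eval_def)
    then show False using xs_eval V_power_nonzero by simp
  qed
  have m1: "m1 = 0" using S_keys[OF k1S] by simp
  have "ai^k0 * \<alpha>^k1 * \<phi> (lc_coeff xs (k1,m1)) = lc_coeff xs (k1,m1)"
    using top_coeffs_twist_invariant m1 assms by simp
  then have "(\<alpha>^k0 * ai^k0) * (\<alpha>^k1 * \<phi> (lc_coeff xs (k1,m1))) = \<alpha>^k0 * lc_coeff xs (k1,m1)"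
    by (metis mult.assoc mult.left_commute)
  then have "\<alpha>^k1 * \<phi> (lc_coeff xs (k1,m1)) = \<alpha>^k0 * lc_coeff xs (k1,m1)"
    using leading_twist by (simp add: mult.commute)
  moreover have "k1 \<noteq> k0" using ne m0 m1 by simp
  moreover have "lc_coeff xs (k1,m1) \<in> K" using xs_lc_over by (rule lc_coeff_in_K)
  ultimately show ?thesis using S_keys[OF k1S] S_keys[OF k0S] k1S by (auto simp: S_def)
qed

text \<open>The coefficient of \<open>V\<^sup>k\<^sup>0 z\<^sup>\<mu>\<close>, \<open>\<mu> = m0 - mvar i0\<close>, in \<open>twisted_relation\<close> is the telescoping identity.\<close>
lemma positive_degree_telescoper:
  assumes "d \<noteq> 0"
  shows "sequence_telescoper K \<phi> b"
proof -
  obtain i0 where i0: "i0 \<in> Poly_Mapping.keys m0"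
    using assms leading_degree by (metis ex_in_conv keys_eq_empty mdeg_0)
  define \<mu> where "\<mu> = m0 - mvar i0"
  have m0: "m0 = \<mu> + mvar i0" using minus_mvar_add[OF i0] \<mu>_def by simp
  have d\<mu>: "mdeg \<mu> + 1 = d" using m0 leading_degree by simp
  define N where "N = Max (\<Union>p\<in>set xs. Poly_Mapping.keys (snd (fst p)))"
  have keysN: "Poly_Mapping.keys m \<subseteq> {..N}" if "((k,m),c) \<in> set xs" for k m c
    using that by (auto simp: N_def intro!: Max_ge)
  have "(k0,m0) \<in> fst ` set xs" using leading_coeff lc_coeff_notin by force
  then have i0N: "i0 \<le> N" using keysN i0 by force
  define c where "c i = of_nat (Poly_Mapping.lookup \<mu> i + 1) * lc_coeff xs (k0, \<mu> + mvar i)" for i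
  have fixed: "\<phi> (lc_coeff xs (k0, \<mu> + mvar i)) = lc_coeff xs (k0, \<mu> + mvar i)" for i
    using top_coeffs_twist_invariant[of "\<mu> + mvar i" k0] d\<mu> leading_twist by simp
  have "\<forall>((k,m),c)\<in>set xs. mdeg m \<le> mdeg \<mu> + 1 \<and> Poly_Mapping.keys m \<subseteq> {..N}"
    using xs_lc_over keysN d\<mu> by (fastforce simp: lc_over_def)
  then have "lc_coeff twisted_relation (k0,\<mu>) = ai^k0 * \<alpha>^k0 * (\<phi> (lc_coeff xs (k0,\<mu>))
      + (\<Sum>i\<le>N. of_nat (Poly_Mapping.lookup \<mu> i + 1) * b i * \<phi> (lc_coeff xs (k0, \<mu> + mvar i))))
      - lc_coeff xs (k0,\<mu>)"
    by (simp add: twisted_relation_def lc_coeff_twisted_image_subtop lc_coeff_uminus)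
  also have "\<dots> = \<phi> (lc_coeff xs (k0,\<mu>)) - lc_coeff xs (k0,\<mu>) + (\<Sum>i\<le>N. c i * b i)"
    unfolding leading_twist fixed c_def by (simp add: algebra_simps)
  finally have "0 = \<phi> (lc_coeff xs (k0,\<mu>)) - lc_coeff xs (k0,\<mu>) + (\<Sum>i\<le>N. c i * b i)"
    using twisted_relation_coeff_zero by simp
  then have "(\<Sum>i\<le>N. c i * b i) = \<phi> (- lc_coeff xs (k0,\<mu>)) - (- lc_coeff xs (k0,\<mu>))"
    by (simp add: algebra_simps)
  moreover have "c i \<in> K \<and> \<phi> (c i) = c i" for i
    using lc_coeff_in_K[OF xs_lc_over] fixed by (simp add: c_def)
  moreover have "c i0 \<noteq> 0"
  proof -
    have "lc_coeff xs (k0, \<mu> + mvar i0) = 1" using leading_coeff m0 by simp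
    then show ?thesis using of_nat_neq_0[of "Poly_Mapping.lookup \<mu> i0 + 1"] by (simp add: c_def)
  qed
  moreover have "- lc_coeff xs (k0,\<mu>) \<in> K" using lc_coeff_in_K[OF xs_lc_over] by simp
  ultimately show ?thesis unfolding sequence_telescoper_def using i0N by blast
qed

end

context eigen_shift begin

lemma normalised_relation:
  assumes rel: "mixed_relation d xs1" and key0: "(k0,m0) \<in> top_keys d xs1"
  obtains xs where "mixed_relation d xs" "top_keys d xs = top_keys d xs1" "lc_coeff xs (k0,m0) = 1"
proof -
  have "lc_coeff xs1 (k0,m0) \<in> K"
    using rel unfolding mixed_relation_def by (blast intro: lc_coeff_in_K)
  then obtain ci where ci: "ci \<in> K" "lc_coeff xs1 (k0,m0) * ci = 1"
    using key0 K_inverse by (auto simp: top_keys_def)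
  define xs where "xs = map (\<lambda>(k,c). (k, ci * c)) xs1"
  have coeff_xs: "lc_coeff xs key = ci * lc_coeff xs1 key" for key
    unfolding xs_def by (rule lc_coeff_scale)
  have leading: "lc_coeff xs (k0,m0) = 1" using ci(2) by (simp add: coeff_xs mult.commute)
  have "ci * y \<noteq> 0" if "y \<noteq> 0" for y
    using ci(2) that by (metis mult.left_commute mult_1_right mult_zero_right)
  then have "top_keys d xs = top_keys d xs1" using coeff_xs by (auto simp: top_keys_def)
  moreover have "lc_over K (\<lambda>(k,m). k \<in> A \<and> mdeg m \<le> d) xs"
    using rel ci(1) by (auto simp: mixed_relation_def lc_over_def xs_def)
  moreover have "lc_eval mixed_eval xs = 0"
    using rel by (simp add: mixed_relation_def xs_def lc_eval_scale)
  ultimately show ?thesis using leading that unfolding mixed_relation_def by (metis zero_neq_one)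
qed

lemma mixed_relation_dichotomy:
  assumes "mixed_relation d0 xs0"
  shows "sequence_telescoper K \<phi> b
    \<or> (\<exists>k0 k1 e. k0 \<in> A \<and> k1 \<in> A \<and> k0 \<noteq> k1 \<and> e \<in> K \<and> e \<noteq> 0 \<and> \<alpha>^k1 * \<phi> e = \<alpha>^k0 * e)"
proof -
  define d where "d = (LEAST d. \<exists>xs. mixed_relation d xs)"
  have "\<exists>xs. mixed_relation d xs" unfolding d_def by (rule LeastI) (use assms in blast)
  have degree_minimal: "\<not> mixed_relation d' ys" if "d' < d" for d' ys
    using not_less_Least[of d' "\<lambda>d. \<exists>xs. mixed_relation d xs"] that d_def by blast
  define n where "n = (LEAST n. \<exists>xs. mixed_relation d xs \<and> card (top_keys d xs) = n)"
  have "\<exists>xs. mixed_relation d xs \<and> card (top_keys d xs) = n"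
    unfolding n_def by (rule LeastI_ex) (use \<open>\<exists>xs. mixed_relation d xs\<close> in blast)
  then obtain xs1 where rel1: "mixed_relation d xs1" and card1: "card (top_keys d xs1) = n" by blast
  have top_minimal1: "card (top_keys d xs1) \<le> card (top_keys d ys)" if "mixed_relation d ys" for ys
    unfolding card1 n_def by (rule Least_le) (use that in blast)
  have "top_keys d xs1 \<noteq> {}"
  proof
    assume "top_keys d xs1 = {}"
    have "lc_coeff xs1 key = 0" for key
    proof (rule coeffs_zero_of_top_coeffs_zero[OF degree_minimal])
      show "lc_over K (\<lambda>(k,m). k \<in> A \<and> mdeg m \<le> d) xs1" "lc_eval mixed_eval xs1 = 0"
        using rel1 by (simp_all add: mixed_relation_def)
      show "lc_coeff xs1 key' = 0" if "mdeg (snd key') = d" for key'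
        using \<open>top_keys d xs1 = {}\<close> that unfolding top_keys_def by blast
    qed
    then show False using rel1 by (simp add: mixed_relation_def)
  qed
  then obtain k0 m0 where key0: "(k0,m0) \<in> top_keys d xs1" by auto
  then obtain xs where rel: "mixed_relation d xs" and same_top: "top_keys d xs = top_keys d xs1"
    and leading: "lc_coeff xs (k0,m0) = 1"
    using normalised_relation[OF rel1] by blast
  have "mdeg m0 = d" using key0 by (simp add: top_keys_def)
  with rel interpret minimal_mixed_relation K \<phi> \<delta> z b V Vi \<alpha> ai A d xs k0 m0
    using degree_minimal top_minimal1 leading
    by (intro minimal_mixed_relation.intro eigen_shift_axioms minimal_mixed_relation_axioms.intro)
      (auto simp: same_top)
  show ?thesis using degree_zero_eigen_ratio positive_degree_telescoper by blast
qed

end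

section \<open>The additive case\<close>

context phi_delta_field begin

lemma hyperalgebraic_iff_lc_relation:
  "hyperalgebraic K \<delta> v \<longleftrightarrow> (\<exists>xs m. lc_over K (\<lambda>_. True) xs
      \<and> lc_eval (meval (\<lambda>i. (\<delta>^^i) v)) xs = 0 \<and> lc_coeff xs m \<noteq> 0)"
proof
  assume "hyperalgebraic K \<delta> v"
  then obtain P :: "'r dpoly" where P: "P \<noteq> 0" "\<forall>m. Poly_Mapping.lookup P m \<in> K" "dpoly_eval \<delta> P v = 0"
    unfolding hyperalgebraic_def by blast
  obtain ks where ks: "distinct ks" "set ks = Poly_Mapping.keys P"
    using finite_distinct_list[of "Poly_Mapping.keys P"] by auto
  define xs where "xs = map (\<lambda>m. (m, Poly_Mapping.lookup P m)) ks"
  have "lc_over K (\<lambda>_. True) xs" using P(2) by (auto simp: xs_def lc_over_def)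
  moreover have "lc_eval (meval (\<lambda>i. (\<delta>^^i) v)) xs = 0"
    using P(3) unfolding xs_def lc_eval_map_pair[OF ks(1)] ks(2) dpoly_eval_def meval_def .
  moreover obtain m where "m \<in> Poly_Mapping.keys P" using P(1) by (metis keys_eq_empty ex_in_conv)
  then have "lc_coeff xs m \<noteq> 0"
    unfolding xs_def lc_coeff_map_pair[OF ks(1)] ks(2) by (simp add: in_keys_iff)
  ultimately show "\<exists>xs m. lc_over K (\<lambda>_. True) xs \<and> lc_eval (meval (\<lambda>i. (\<delta>^^i) v)) xs = 0
      \<and> lc_coeff xs m \<noteq> 0" by blast
next
  assume "\<exists>xs m. lc_over K (\<lambda>_. True) xs \<and> lc_eval (meval (\<lambda>i. (\<delta>^^i) v)) xs = 0 \<and> lc_coeff xs m \<noteq> 0"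
  then obtain xs m where xs: "lc_over K (\<lambda>_. True) xs" "lc_eval (meval (\<lambda>i. (\<delta>^^i) v)) xs = 0"
    "lc_coeff xs m \<noteq> 0" by blast
  define P :: "'r dpoly" where "P = Abs_poly_mapping (lc_coeff xs)"
  have lookup_P: "Poly_Mapping.lookup P = lc_coeff xs"
    unfolding P_def using finite_lc_coeff_support[of xs] by (simp add: lookup_Abs_poly_mapping)
  have "P \<noteq> 0" using xs(3) lookup_P by (metis lookup_zero)
  moreover have "\<forall>m. Poly_Mapping.lookup P m \<in> K" using lookup_P lc_coeff_in_K[OF xs(1)] by simp
  moreover have "Poly_Mapping.keys P = {m. lc_coeff xs m \<noteq> 0}" by (auto simp: in_keys_iff lookup_P)
  then have "dpoly_eval \<delta> P v = 0"
    using xs(2) unfolding dpoly_eval_def lookup_P lc_eval_eq_sum_support[of _ xs] meval_def by simp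
  ultimately show "hyperalgebraic K \<delta> v" unfolding hyperalgebraic_def by blast
qed

lemma hyperalgebraic_of_linear_relation:
  assumes c: "\<And>i. i \<le> n \<Longrightarrow> c i \<in> K" and c_nonzero: "i \<le> n" "c i \<noteq> 0" and G: "G \<in> K"
    and rel: "(\<Sum>i\<le>n. c i * (\<delta>^^i) v) = G"
  shows "hyperalgebraic K \<delta> v"
proof -
  define xs where "xs = map (\<lambda>i. (mvar i, c i)) [0..<Suc n] @ [(0, - G)]"
  have "set [0..<Suc n] = {..n}" by auto
  then have "lc_eval (meval (\<lambda>i. (\<delta>^^i) v)) xs = (\<Sum>i\<le>n. c i * (\<delta>^^i) v) - G"
    unfolding xs_def lc_eval_append lc_eval_map[OF distinct_upt] by simp
  moreover have "lc_over K (\<lambda>_. True) xs" using c G by (auto simp: xs_def lc_over_def)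
  moreover have "lc_coeff xs (mvar i) = c i"
    using c_nonzero(1) by (simp add: xs_def lc_coeff_map[OF distinct_upt] if_distrib cong: if_cong)
  ultimately show ?thesis
    unfolding hyperalgebraic_iff_lc_relation using rel c_nonzero(2) by (metis diff_self)
qed

lemma phi_fixed_in_K:
  assumes "{x. \<phi> x = x} = const_field K \<phi>" and "\<phi> h = h"
  shows "h \<in> K"
  using assms by (auto simp: const_field_def)

lemma telescoper_of_hyperalgebraic_additive:
  assumes b: "b \<in> K" and hv: "\<phi> v - v = b" and hy: "hyperalgebraic K \<delta> v"
  shows "linear_telescoper (const_field K \<phi>) K \<phi> \<delta> b"
proof -
  have phv: "\<phi> v = v + b" using hv by (simp add: algebra_simps)
  interpret additive: eigen_shift K \<phi> \<delta> "\<lambda>i. (\<delta>^^i) v" "\<lambda>i. (\<delta>^^i) b" 1 1 1 1 "{0}"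
    by unfold_locales (auto simp: setting b phi_delta_iter phv)
  obtain xs m where xs: "lc_over K (\<lambda>_. True) xs" "lc_eval (meval (\<lambda>i. (\<delta>^^i) v)) xs = 0"
    and nz: "lc_coeff xs m \<noteq> 0"
    using hy unfolding hyperalgebraic_iff_lc_relation by blast
  obtain d where d: "lc_over K (\<lambda>m. True \<and> mdeg m \<le> d) xs" using lc_over_bounded[OF xs(1)] .
  have "additive.mixed_relation d (lc_lift 0 1 xs)"
    unfolding additive.mixed_relation_def
  proof (intro conjI exI)
    show "lc_over K (\<lambda>(k, m). k \<in> {0} \<and> mdeg m \<le> d) (lc_lift 0 1 xs)"
      using d by (auto simp: lc_over_def lc_lift_def)
    show "lc_eval additive.mixed_eval (lc_lift 0 1 xs) = 0" using xs(2) by (simp add: additive.lc_eval_lift)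
    show "lc_coeff (lc_lift 0 1 xs) (0,m) \<noteq> 0" using nz by (simp add: lc_coeff_lift)
  qed
  then show ?thesis
    using additive.mixed_relation_dichotomy by (auto simp: linear_telescoper_iff)
qed

lemma hyperalgebraic_of_telescoper_additive:
  assumes fixc: "{x. \<phi> x = x} = const_field K \<phi>" and hv: "\<phi> v - v = b"
    and tel: "linear_telescoper (const_field K \<phi>) K \<phi> \<delta> b"
  shows "hyperalgebraic K \<delta> v"
proof -
  obtain n c f where c: "\<forall>i\<le>n. c i \<in> K \<and> \<phi> (c i) = c i" and c_nonzero: "\<exists>i\<le>n. c i \<noteq> 0"
    and f: "f \<in> K" and eq: "(\<Sum>i\<le>n. c i * (\<delta>^^i) b) = \<phi> f - f"
    using tel unfolding linear_telescoper_iff sequence_telescoper_def by blast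
  obtain i where i: "i \<le> n" "c i \<noteq> 0" using c_nonzero by blast
  have phv: "\<phi> v = v + b" using hv by (simp add: algebra_simps)
  define h where "h = (\<Sum>i\<le>n. c i * (\<delta>^^i) v) - f"
  have "\<phi> h = (\<Sum>i\<le>n. c i * ((\<delta>^^i) v + (\<delta>^^i) b)) - \<phi> f"
    using c by (simp add: h_def phi_sum phi_delta_iter phv)
  also have "\<dots> = h" unfolding h_def using eq by (simp add: algebra_simps sum.distrib)
  finally have "h \<in> K" by (rule phi_fixed_in_K[OF fixc])
  moreover have "(\<Sum>i\<le>n. c i * (\<delta>^^i) v) = f + h" by (simp add: h_def)
  ultimately show ?thesis
    using c f i by (intro hyperalgebraic_of_linear_relation[of n c i "f + h"]) auto
qed

end

section \<open>The multiplicative case\<close>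

lemma less_monom_iff: "(f::monom) < g \<longleftrightarrow> less_fun (Poly_Mapping.lookup f) (Poly_Mapping.lookup g)"
  by (simp add: less_poly_mapping.rep_eq)

lemma mvar_less:
  assumes "m \<noteq> 0" "Poly_Mapping.keys m \<subseteq> {..<j}"
  shows "mvar j < m"
proof -
  have ne: "Poly_Mapping.keys m \<noteq> {}" using assms(1) by simp
  define k1 where "k1 = Min (Poly_Mapping.keys m)"
  have k1: "k1 \<in> Poly_Mapping.keys m" unfolding k1_def using ne by simp
  have k1j: "k1 < j" using k1 assms(2) by auto
  have below: "Poly_Mapping.lookup m k' = 0" if "k' < k1" for k'
  proof (rule ccontr)
    assume "Poly_Mapping.lookup m k' \<noteq> 0"
    then have "k' \<in> Poly_Mapping.keys m" by (simp add: in_keys_iff)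
    then have "k1 \<le> k'" unfolding k1_def by simp
    then show False using that by simp
  qed
  show ?thesis unfolding less_monom_iff less_fun_def
  proof (intro exI[of _ k1] conjI allI impI)
    show "Poly_Mapping.lookup (mvar j) k1 < Poly_Mapping.lookup m k1"
      using k1 k1j by (simp add: lookup_single in_keys_iff)
    fix k' assume "k' < k1"
    then show "Poly_Mapping.lookup (mvar j) k' = Poly_Mapping.lookup m k'"
      using below k1j by (simp add: lookup_single when_def)
  qed
qed

lemma add_mvar_neq_0: "(m::monom) + mvar i \<noteq> 0"
proof
  assume "m + mvar i = 0"
  then have "Poly_Mapping.lookup (m + mvar i) i = 0" by simp
  then show False by (simp add: lookup_add)
qed

definition mshift :: "monom \<Rightarrow> monom" where "mshift m = Abs_poly_mapping (\<lambda>j. Poly_Mapping.lookup m (Suc j))"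

lemma lookup_mshift[simp]: "Poly_Mapping.lookup (mshift m) j = Poly_Mapping.lookup m (Suc j)"
proof -
  have "finite {j. Poly_Mapping.lookup m (Suc j) \<noteq> 0}"
    using finite_vimageI[OF finite_keys[of m], of Suc] by (simp add: in_keys_iff vimage_def)
  then show ?thesis unfolding mshift_def by simp
qed

lemma mshift_add: "mshift (m + n) = mshift m + mshift n"
  by (rule poly_mapping_eqI) (simp add: lookup_add)
lemma mshift_0[simp]: "mshift 0 = 0" by (rule poly_mapping_eqI) simp
lemma mshift_mvar_0: "mshift (mvar 0) = 0" by (rule poly_mapping_eqI) (simp add: lookup_single)
lemma mshift_mvar_Suc: "mshift (mvar (Suc i)) = mvar i" by (rule poly_mapping_eqI) (simp add: lookup_single when_def)

lemma mdeg_mshift: "mdeg m = Poly_Mapping.lookup m 0 + mdeg (mshift m)"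
proof -
  obtain N where N: "Poly_Mapping.keys m \<subseteq> {..Suc N}"
    using finite_nat_set_iff_bounded_le[of "Poly_Mapping.keys m"] by (metis finite_keys atMost_iff le_SucI subsetI)
  have ks: "Poly_Mapping.keys (mshift m) \<subseteq> {..N}"
  proof
    fix j assume "j \<in> Poly_Mapping.keys (mshift m)"
    then have "Suc j \<in> Poly_Mapping.keys m" by (simp add: in_keys_iff)
    then show "j \<in> {..N}" using N by auto
  qed
  have "mdeg m = (\<Sum>i\<le>Suc N. Poly_Mapping.lookup m i)" using N by (rule mdeg_superset[rotated]) simp
  also have "\<dots> = Poly_Mapping.lookup m 0 + (\<Sum>i\<le>N. Poly_Mapping.lookup m (Suc i))"
    by (rule sum.atMost_Suc_shift)
  also have "(\<Sum>i\<le>N. Poly_Mapping.lookup m (Suc i)) = mdeg (mshift m)"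
    using mdeg_superset[of "{..N}" "mshift m"] ks by simp
  finally show ?thesis .
qed

lemma mshift_inj: "mdeg m = mdeg n \<Longrightarrow> mshift m = mshift n \<Longrightarrow> m = n"
proof (rule poly_mapping_eqI)
  fix k assume d: "mdeg m = mdeg n" and s: "mshift m = mshift n"
  show "Poly_Mapping.lookup m k = Poly_Mapping.lookup n k"
  proof (cases k)
    case 0
    then show ?thesis using d s mdeg_mshift[of m] mdeg_mshift[of n] by simp
  next
    case (Suc j)
    then show ?thesis using arg_cong[OF s, of "\<lambda>p. Poly_Mapping.lookup p j"] by simp
  qed
qed

context phi_delta_field begin

lemma lc_span_mult:
  assumes "x \<in> lc_span K (meval z) Q1" "y \<in> lc_span K (meval z) Q2" "\<And>m1 m2. Q1 m1 \<Longrightarrow> Q2 m2 \<Longrightarrow> Q3 (m1 + m2)"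
  shows "x * y \<in> lc_span K (meval z) Q3"
proof -
  obtain xs where xs: "lc_over K Q1 xs" "x = lc_eval (meval z) xs" using assms(1) by (auto simp: lc_span_def)
  obtain ys where ys: "lc_over K Q2 ys" "y = lc_eval (meval z) ys" using assms(2) by (auto simp: lc_span_def)
  define ps where "ps = concat (map (\<lambda>(m1,c1). map (\<lambda>(m2,c2). (m1 + m2, c1 * c2)) ys) xs)"
  have inner: "lc_eval (meval z) (map (\<lambda>(m2,c2). (m1 + m2, c1 * c2)) ys) = c1 * meval z m1 * lc_eval (meval z) ys" for m1 c1
    by (induction ys) (auto simp: meval_add algebra_simps)
  have "lc_eval (meval z) ps = lc_eval (meval z) xs * lc_eval (meval z) ys"
    unfolding ps_def by (induction xs) (auto simp: inner algebra_simps)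
  moreover have "lc_over K Q3 ps" using xs(1) ys(1) assms(3) unfolding ps_def lc_over_def by fastforce
  ultimately show ?thesis using xs ys unfolding lc_span_def by (metis (mono_tags, lifting) mem_Collect_eq)
qed

lemma delta_meval_lc_span:
  assumes xS: "\<And>l. x (Suc l) = \<delta> (x l)"
  shows "Poly_Mapping.keys m \<subseteq> {..<j} \<Longrightarrow>
    \<delta> (meval x m) \<in> lc_span K (meval x) (\<lambda>m'. m' \<noteq> 0 \<and> Poly_Mapping.keys m' \<subseteq> {..<Suc j})"
proof (induction "mdeg m" arbitrary: m)
  case 0
  then have "m = 0" by (simp add: mdeg_eq0[symmetric])
  then show ?case by simp
next
  case (Suc n)
  then have "m \<noteq> 0" by auto
  then obtain l where l: "l \<in> Poly_Mapping.keys m" by (metis keys_eq_empty ex_in_conv)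
  define m' where "m' = m - mvar l"
  have mm: "m = m' + mvar l" using minus_mvar_add[OF l] m'_def by simp
  have km': "Poly_Mapping.keys m' \<subseteq> Poly_Mapping.keys m" using mm by (auto simp: in_keys_iff lookup_add)
  have lj: "l < j" using l Suc.prems by auto
  have dm': "mdeg m' = n" using mm Suc.hyps(2)[symmetric] by simp
  have "\<delta> (meval x m) = meval x m' * x (Suc l) + \<delta> (meval x m') * x l"
    using mm by (simp add: meval_add delta_mult xS)
  moreover have "meval x m' * x (Suc l) \<in> lc_span K (meval x) (\<lambda>m'. m' \<noteq> 0 \<and> Poly_Mapping.keys m' \<subseteq> {..<Suc j})"
  proof -
    have eqm: "meval x m' * x (Suc l) = 1 * meval x (m' + mvar (Suc l))" by (simp add: meval_add)
    have nz: "m' + mvar (Suc l) \<noteq> 0" by (rule add_mvar_neq_0)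
    have ksub: "Poly_Mapping.keys (m' + mvar (Suc l)) \<subseteq> {..<Suc j}"
    proof -
      have "Poly_Mapping.keys (m' + mvar (Suc l)) \<subseteq> insert (Suc l) (Poly_Mapping.keys m)"
        using keys_add_subset[of m' "mvar (Suc l)"] km' by auto
      moreover have "insert (Suc l) (Poly_Mapping.keys m) \<subseteq> {..<Suc j}" using Suc.prems lj by auto
      ultimately show ?thesis by (rule order_trans)
    qed
    have "1 * meval x (m' + mvar (Suc l)) \<in> lc_span K (meval x) (\<lambda>m'. m' \<noteq> 0 \<and> Poly_Mapping.keys m' \<subseteq> {..<Suc j})"
      by (rule lc_span_single) (use nz ksub in auto)
    then show ?thesis unfolding eqm .
  qed
  moreover have "\<delta> (meval x m') * x l \<in> lc_span K (meval x) (\<lambda>m'. m' \<noteq> 0 \<and> Poly_Mapping.keys m' \<subseteq> {..<Suc j})"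
  proof (rule lc_span_mult_var)
    show "\<delta> (meval x m') \<in> lc_span K (meval x) (\<lambda>m'. m' \<noteq> 0 \<and> Poly_Mapping.keys m' \<subseteq> {..<Suc j})"
      using Suc.hyps(1)[OF dm'[symmetric]] km' Suc.prems by blast
    fix m'' :: monom assume "m'' \<noteq> 0 \<and> Poly_Mapping.keys m'' \<subseteq> {..<Suc j}"
    moreover have "m'' + mvar l \<noteq> 0" by (rule add_mvar_neq_0)
    moreover have "Poly_Mapping.keys ((m''::monom) + mvar l) \<subseteq> insert l (Poly_Mapping.keys m'')"
      using keys_add_subset[of m'' "mvar l"] by auto
    ultimately show "m'' + mvar l \<noteq> 0 \<and> Poly_Mapping.keys (m'' + mvar l) \<subseteq> {..<Suc j}"
      using lj by auto
  qed
  ultimately show ?case by (simp add: lc_span_add)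
qed

lemma delta_lc_span:
  assumes xS: "\<And>l. x (Suc l) = \<delta> (x l)" and Q: "\<And>m. m \<noteq> 0 \<Longrightarrow> Q m"
    and r: "r \<in> lc_span K (meval x) (\<lambda>m. Q m \<and> Poly_Mapping.keys m \<subseteq> {..<j})"
  shows "\<delta> r \<in> lc_span K (meval x) (\<lambda>m. Q m \<and> Poly_Mapping.keys m \<subseteq> {..<Suc j})"
proof -
  obtain ys where ys: "lc_over K (\<lambda>m. Q m \<and> Poly_Mapping.keys m \<subseteq> {..<j}) ys" "r = lc_eval (meval x) ys"
    using r by (auto simp: lc_span_def)
  have "\<delta> (lc_eval (meval x) ys) \<in> lc_span K (meval x) (\<lambda>m. Q m \<and> Poly_Mapping.keys m \<subseteq> {..<Suc j})"
    using ys(1)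
  proof (induction ys)
    case (Cons p ys)
    obtain m c where p: "p = (m,c)" by force
    have mc: "Q m" "Poly_Mapping.keys m \<subseteq> {..<j}" "c \<in> K" using Cons.prems p by (auto simp: lc_over_def)
    have "\<delta> (lc_eval (meval x) (p # ys)) = c * \<delta> (meval x m) + \<delta> c * meval x m + \<delta> (lc_eval (meval x) ys)"
      using p by (simp add: delta_mult)
    moreover have "c * \<delta> (meval x m) \<in> lc_span K (meval x) (\<lambda>m. Q m \<and> Poly_Mapping.keys m \<subseteq> {..<Suc j})"
      by (rule lc_span_scale[OF mc(3)], rule lc_span_mono[OF delta_meval_lc_span[where x=x and m=m and j=j, OF xS mc(2)]]) (use Q in auto)
    moreover have "\<delta> c * meval x m \<in> lc_span K (meval x) (\<lambda>m. Q m \<and> Poly_Mapping.keys m \<subseteq> {..<Suc j})"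
      by (rule lc_span_single) (use mc in auto)
    moreover have "\<delta> (lc_eval (meval x) ys) \<in> lc_span K (meval x) (\<lambda>m. Q m \<and> Poly_Mapping.keys m \<subseteq> {..<Suc j})"
      using Cons by (auto simp: lc_over_def)
    ultimately show ?case by (simp add: lc_span_add)
  qed simp
  then show ?thesis using ys by simp
qed

end

locale eigen_unit = phi_delta_field K \<phi> \<delta> for K :: "'r::comm_ring_1 set" and \<phi> \<delta> +
  fixes v w a a_inv :: 'r
  assumes vw: "v * w = 1" and phv: "\<phi> v = a * v" and aK: "a \<in> K" and aiK: "a_inv \<in> K"
    and aai: "a * a_inv = 1"
begin

definition u where "u = \<delta> v * w"
definition du where "du j = (\<delta>^^j) u"
definition dv where "dv i = (\<delta>^^i) v"
definition q where "q i = dv i * w"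

lemma du_Suc: "du (Suc l) = \<delta> (du l)" by (simp add: du_def)
lemma dv_Suc: "dv (Suc l) = \<delta> (dv l)" by (simp add: dv_def)

lemma delta_w: "\<delta> w = - (u * w)"
proof -
  have "0 = \<delta> (v * w)" using vw by simp
  also have "\<dots> = v * \<delta> w + \<delta> v * w" by (rule delta_mult)
  finally have "v * \<delta> w = - (\<delta> v * w)" by (simp add: eq_neg_iff_add_eq_0 add.commute)
  then have h: "w * (v * \<delta> w) = - (w * (\<delta> v * w))" by simp
  have l: "w * (v * \<delta> w) = \<delta> w" using vw by (simp add: mult.assoc[symmetric] mult.commute[of w v])
  have r: "w * (\<delta> v * w) = u * w" by (simp add: u_def ac_simps)
  show ?thesis using h l r by simp
qed

lemma q_Suc: "q (Suc i) = \<delta> (q i) + u * q i"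
  unfolding q_def using delta_w by (simp add: delta_mult dv_Suc algebra_simps)

lemma q_0: "q 0 = 1" using vw by (simp add: q_def dv_def)
lemma q_1: "q 1 = du 0" by (simp add: q_def dv_def du_def u_def)
lemma dv_eq_v_q: "dv i = v * q i"
proof -
  have "v * q i = dv i * (v * w)" by (simp add: q_def ac_simps)
  then show ?thesis using vw by simp
qed

lemma q_Suc_leading: "\<exists>r\<in>lc_span K (meval du) (\<lambda>m. m \<noteq> 0 \<and> Poly_Mapping.keys m \<subseteq> {..<i}). q (Suc i) = du i + r"
proof (induction i)
  case 0
  show ?case using q_1 by (intro bexI[of _ 0]) auto
next
  case (Suc i)
  then obtain r where r: "r \<in> lc_span K (meval du) (\<lambda>m. m \<noteq> 0 \<and> Poly_Mapping.keys m \<subseteq> {..<i})" and q: "q (Suc i) = du i + r"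
    by blast
  have "q (Suc (Suc i)) = du (Suc i) + (\<delta> r + du 0 * du i + r * du 0)"
    unfolding q_Suc[of "Suc i"] q by (simp add: du_Suc du_def algebra_simps)
  moreover have "\<delta> r \<in> lc_span K (meval du) (\<lambda>m. m \<noteq> 0 \<and> Poly_Mapping.keys m \<subseteq> {..<Suc i})"
    by (rule delta_lc_span[OF du_Suc _ r]) simp
  moreover have "du 0 * du i \<in> lc_span K (meval du) (\<lambda>m. m \<noteq> 0 \<and> Poly_Mapping.keys m \<subseteq> {..<Suc i})"
  proof -
    have "du 0 * du i = 1 * meval du (mvar i + mvar 0)" by (simp add: meval_add)
    moreover have "1 * meval du (mvar i + mvar 0) \<in> lc_span K (meval du) (\<lambda>m. m \<noteq> 0 \<and> Poly_Mapping.keys m \<subseteq> {..<Suc i})"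
    proof (rule lc_span_single)
      show "mvar i + mvar 0 \<noteq> 0 \<and> Poly_Mapping.keys (mvar i + mvar 0) \<subseteq> {..<Suc i}"
        using add_mvar_neq_0[of "mvar i" 0] keys_add_subset[of "mvar i" "mvar 0"] by auto
    qed simp
    ultimately show ?thesis by simp
  qed
  moreover have "r * du 0 \<in> lc_span K (meval du) (\<lambda>m. m \<noteq> 0 \<and> Poly_Mapping.keys m \<subseteq> {..<Suc i})"
  proof (rule lc_span_mult_var[OF r])
    fix m :: monom assume "m \<noteq> 0 \<and> Poly_Mapping.keys m \<subseteq> {..<i}"
    moreover have "Poly_Mapping.keys (m + mvar 0) \<subseteq> insert 0 (Poly_Mapping.keys m)"
      using keys_add_subset[of m "mvar 0"] by auto
    ultimately show "m + mvar 0 \<noteq> 0 \<and> Poly_Mapping.keys (m + mvar 0) \<subseteq> {..<Suc i}"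
      using add_mvar_neq_0[of m 0] by auto
  qed
  ultimately show ?case by (blast intro: lc_span_add)
qed

lemma q_leading: "\<exists>r\<in>lc_span K (meval du) (\<lambda>m. mshift (mvar l) < m). q l = meval du (mshift (mvar l)) + r"
proof (cases l)
  case 0
  then show ?thesis using q_0 mshift_mvar_0 by (intro bexI[of _ 0]) auto
next
  case (Suc i)
  obtain r where r: "r \<in> lc_span K (meval du) (\<lambda>m. m \<noteq> 0 \<and> Poly_Mapping.keys m \<subseteq> {..<i})" "q (Suc i) = du i + r"
    using q_Suc_leading[of i] by blast
  have "r \<in> lc_span K (meval du) (\<lambda>m. mvar i < m)"
    by (rule lc_span_mono[OF r(1)]) (erule conjE, erule mvar_less, assumption)
  then have "r \<in> lc_span K (meval du) (\<lambda>m. mshift (mvar l) < m)" using Suc mshift_mvar_Suc[of i] by simp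
  then show ?thesis using r(2) Suc mshift_mvar_Suc[of i] by auto
qed

lemma meval_dv_leading:
  "\<exists>r\<in>lc_span K (meval du) (\<lambda>m'. mshift m < m'). meval dv m = v ^ mdeg m * (meval du (mshift m) + r)"
proof (induction "mdeg m" arbitrary: m)
  case 0
  then have "m = 0" by (simp add: mdeg_eq0[symmetric])
  then show ?case by (intro bexI[of _ 0]) auto
next
  case (Suc n)
  then have "m \<noteq> 0" by auto
  then obtain l where l: "l \<in> Poly_Mapping.keys m" by (metis keys_eq_empty ex_in_conv)
  define m' where "m' = m - mvar l"
  have mm: "m = m' + mvar l" using minus_mvar_add[OF l] m'_def by simp
  have dm': "mdeg m' = n" using mm Suc.hyps(2)[symmetric] by simp
  obtain t1 where t1: "t1 \<in> lc_span K (meval du) (\<lambda>m''. mshift m' < m'')" "meval dv m' = v ^ mdeg m' * (meval du (mshift m') + t1)"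
    using Suc.hyps(1)[OF dm'[symmetric]] by blast
  obtain t2 where t2: "t2 \<in> lc_span K (meval du) (\<lambda>m''. mshift (mvar l) < m'')" "q l = meval du (mshift (mvar l)) + t2"
    using q_leading[of l] by blast
  let ?M1 = "mshift m'" and ?M2 = "mshift (mvar l)"
  have shmm: "mshift m = ?M1 + ?M2" using mm by (simp add: mshift_add)
  have "meval dv m = v ^ mdeg m' * (meval du ?M1 + t1) * (v * (meval du ?M2 + t2))"
    using mm t1(2) t2(2) dv_eq_v_q[of l] by (simp add: meval_add)
  also have "\<dots> = v ^ mdeg m * (meval du (mshift m) + (meval du ?M1 * t2 + t1 * meval du ?M2 + t1 * t2))"
    using mm shmm by (simp add: meval_add algebra_simps)
  finally have eq: "meval dv m = v ^ mdeg m * (meval du (mshift m) + (meval du ?M1 * t2 + t1 * meval du ?M2 + t1 * t2))" .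
  have m1: "meval du ?M1 \<in> lc_span K (meval du) (\<lambda>m''. m'' = ?M1)" using lc_span_single[of "\<lambda>m''. m'' = ?M1" ?M1 1] by simp
  have m2: "meval du ?M2 \<in> lc_span K (meval du) (\<lambda>m''. m'' = ?M2)" using lc_span_single[of "\<lambda>m''. m'' = ?M2" ?M2 1] by simp
  have A: "meval du ?M1 * t2 \<in> lc_span K (meval du) (\<lambda>m''. mshift m < m'')"
    by (rule lc_span_mult[OF m1 t2(1)]) (simp add: shmm add_strict_left_mono)
  have B: "t1 * meval du ?M2 \<in> lc_span K (meval du) (\<lambda>m''. mshift m < m'')"
    by (rule lc_span_mult[OF t1(1) m2]) (simp add: shmm add_strict_right_mono)
  have C: "t1 * t2 \<in> lc_span K (meval du) (\<lambda>m''. mshift m < m'')"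
    by (rule lc_span_mult[OF t1(1) t2(1)]) (simp add: shmm add_strict_mono)
  show ?case using eq A B C by (blast intro: lc_span_add)
qed

end

context phi_delta_field begin

text \<open>Taking logarithmic derivatives of \<open>a\<^sup>k\<^sup>1 \<phi> e = a\<^sup>k\<^sup>0 e\<close> gives
  \<open>(k1 - k0) \<delta>a/a = \<phi>(h) - h\<close> with \<open>h = - \<delta>e/e\<close>.\<close>
lemma telescoper_of_power_eigen_ratio:
  assumes a: "a \<in> K" "a_inv \<in> K" "a * a_inv = 1" and k: "k0 \<noteq> k1"
    and e: "e \<in> K" "e \<noteq> 0" and eq: "a^k1 * \<phi> e = a^k0 * e"
  shows "linear_telescoper (const_field K \<phi>) K \<phi> \<delta> (\<delta> a * a_inv)"
proof -
  define g where "g = \<delta> a * a_inv"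
  obtain e_inv where e_inv: "e_inv \<in> K" "e * e_inv = 1" using K_inverse[OF e] by blast
  define h where "h = \<delta> e * e_inv"
  have "h * e = \<delta> e * (e * e_inv)" by (simp add: h_def ac_simps)
  then have delta_e: "\<delta> e = h * e" using e_inv by simp
  have delta_a_power: "\<delta> (a ^ k) = of_nat k * g * a ^ k" for k using delta_power[OF a(3)] by (simp add: g_def)
  have "\<delta> (a^k0 * e) = (of_nat k0 * g + h) * (a^k0 * e)"
    by (simp add: delta_mult delta_a_power delta_e algebra_simps)
  moreover have "\<delta> (a^k1 * \<phi> e) = (of_nat k1 * g + \<phi> h) * (a^k0 * e)"
    unfolding eq[symmetric] using arg_cong[OF delta_e, of \<phi>]
    by (simp add: delta_mult delta_a_power phi_delta algebra_simps)
  ultimately have "(of_nat k0 * g + h) * (a^k0 * e) = (of_nat k1 * g + \<phi> h) * (a^k0 * e)"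
    using eq by simp
  moreover have "(a^k0 * e) * (a_inv^k0 * e_inv) = 1"
    using a(3) e_inv(2) by (metis mult.assoc mult.left_commute mult_1_right power_mult_distrib power_one)
  ultimately have "of_nat k0 * g + h = of_nat k1 * g + \<phi> h"
    by (metis mult.assoc mult_1_right)
  then have "of_int (int k1 - int k0) * g = \<phi> (- h) - (- h)" by (simp add: algebra_simps)
  moreover have "(of_int (int k1 - int k0) :: 'r) \<noteq> 0" using k by (intro of_int_neq_0) simp
  moreover have "- h \<in> K" using a e e_inv by (simp add: h_def)
  ultimately have "sequence_telescoper K \<phi> (\<lambda>i. (\<delta>^^i) g)"
    unfolding sequence_telescoper_def
    by (intro exI[of _ 0] exI[of _ "\<lambda>_. of_int (int k1 - int k0)"] conjI bexI[of _ "- h"]) auto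
  then show ?thesis by (simp add: linear_telescoper_iff g_def)
qed

end

context eigen_unit begin

definition g where "g = \<delta> a * a_inv"

lemma g_K: "g \<in> K" using aK aiK by (simp add: g_def)

lemma phi_w: "\<phi> w = a_inv * w"
proof -
  have "\<phi> v * \<phi> w = 1" using vw by (metis phi_1 phi_mult)
  then have "a * v * \<phi> w = 1" using phv by simp
  then have "(a_inv * w) * (a * v * \<phi> w) = a_inv * w" by simp
  moreover have "(a_inv * w) * (a * v * \<phi> w) = (a * a_inv) * (v * w) * \<phi> w" by (simp add: ac_simps)
  ultimately show ?thesis using aai vw by simp
qed

lemma phi_u: "\<phi> u = u + g"
proof -
  have "\<phi> u = \<delta> (a * v) * (a_inv * w)" by (simp add: u_def phi_delta phv phi_w)
  also have "\<dots> = (a * a_inv) * (\<delta> v * w) + (\<delta> a * a_inv) * (v * w)" by (simp add: delta_mult algebra_simps)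
  finally show ?thesis using aai vw by (simp add: u_def g_def)
qed

sublocale log: eigen_shift K \<phi> \<delta> du "\<lambda>j. (\<delta>^^j) g" v w a a_inv UNIV
  by unfold_locales (auto simp: setting g_K du_def phi_delta_iter phi_u vw phv aK aiK aai)

definition dv_remainder :: "monom \<Rightarrow> (monom \<times> 'r) list" where
  "dv_remainder m = (SOME ys. lc_over K (\<lambda>m'. mshift m < m') ys
      \<and> meval dv m = v ^ mdeg m * (meval du (mshift m) + lc_eval (meval du) ys))"

lemma dv_remainder:
  "lc_over K (\<lambda>m'. mshift m < m') (dv_remainder m)"
  "meval dv m = v ^ mdeg m * (meval du (mshift m) + lc_eval (meval du) (dv_remainder m))"
proof -
  have "\<exists>ys. lc_over K (\<lambda>m'. mshift m < m') ys
      \<and> meval dv m = v ^ mdeg m * (meval du (mshift m) + lc_eval (meval du) ys)"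
    using meval_dv_leading[of m] by (auto simp: lc_span_def)
  from someI_ex[OF this] show "lc_over K (\<lambda>m'. mshift m < m') (dv_remainder m)"
    "meval dv m = v ^ mdeg m * (meval du (mshift m) + lc_eval (meval du) (dv_remainder m))"
    unfolding dv_remainder_def by blast+
qed

text \<open>The monomial \<open>\<delta>\<^sup>m v\<close> rewritten in terms of \<open>v\<close> and \<open>u = \<delta>v/v\<close>; its term with the
  smallest \<open>u\<close>-monomial determines \<open>m\<close>.\<close>
definition dv_term :: "monom \<Rightarrow> ((nat \<times> monom) \<times> 'r) list" where
  "dv_term m = ((mdeg m, mshift m), 1) # lc_lift (mdeg m) 1 (dv_remainder m)"

lemma lc_eval_dv_term: "lc_eval log.mixed_eval (dv_term m) = meval dv m"
  by (simp add: dv_term_def log.lc_eval_lift log.mixed_eval_def dv_remainder(2)[of m] algebra_simps)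

lemma lc_over_dv_term: "lc_over K (\<lambda>_. True) (dv_term m)"
  using dv_remainder(1)[of m] by (auto simp: dv_term_def lc_lift_def lc_over_def)

lemma lc_coeff_dv_term:
  assumes "M \<le> mshift m"
  shows "lc_coeff (dv_term m) (k, M) = (if (k, M) = (mdeg m, mshift m) then 1 else 0)"
proof -
  have "lc_coeff (dv_remainder m) M = 0"
    using assms dv_remainder(1)[of m] by (intro lc_coeff_notin) (auto simp: lc_over_def)
  then show ?thesis by (auto simp: dv_term_def lc_coeff_lift)
qed

definition dv_expansion :: "(monom \<times> 'r) list \<Rightarrow> ((nat \<times> monom) \<times> 'r) list" where
  "dv_expansion ys = concat (map (\<lambda>(m,c). map (\<lambda>(key,c'). (key, c * c')) (dv_term m)) ys)"

lemma lc_eval_dv_expansion: "lc_eval log.mixed_eval (dv_expansion ys) = lc_eval (meval dv) ys"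
  by (induction ys) (auto simp: dv_expansion_def lc_eval_scale lc_eval_dv_term)

lemma lc_coeff_dv_expansion: "lc_coeff (dv_expansion ys) key = lc_eval (\<lambda>m. lc_coeff (dv_term m) key) ys"
  by (induction ys) (auto simp: dv_expansion_def lc_coeff_scale)

lemma lc_over_dv_expansion: "lc_over K (\<lambda>_. True) ys \<Longrightarrow> lc_over K (\<lambda>_. True) (dv_expansion ys)"
  using lc_over_dv_term by (fastforce simp: dv_expansion_def lc_over_def)

lemma log_mixed_relation_of_hyperalgebraic:
  assumes "hyperalgebraic K \<delta> v"
  obtains d xs where "log.mixed_relation d xs"
proof -
  have "(\<lambda>i. (\<delta>^^i) v) = dv" by (simp add: dv_def fun_eq_iff)
  then obtain ys m1 where ys: "lc_over K (\<lambda>_. True) ys" "lc_eval (meval dv) ys = 0"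
    and m1: "lc_coeff ys m1 \<noteq> 0"
    using assms unfolding hyperalgebraic_iff_lc_relation by auto
  define xs where "xs = dv_expansion ys"
  have "lc_over K (\<lambda>_. True) xs" using ys(1) by (simp add: xs_def lc_over_dv_expansion)
  then obtain d where "lc_over K (\<lambda>key. True \<and> mdeg (snd key) \<le> d) xs" by (rule lc_over_bounded)
  then have d: "lc_over K (\<lambda>(k,m). k \<in> UNIV \<and> mdeg m \<le> d) xs" by (auto simp: lc_over_def)
  have eval_xs: "lc_eval log.mixed_eval xs = lc_eval (meval dv) ys" by (simp add: xs_def lc_eval_dv_expansion)
  have coeff_xs: "lc_coeff xs key = lc_eval (\<lambda>m. lc_coeff (dv_term m) key) ys" for key
    by (simp add: xs_def lc_coeff_dv_expansion)
  define S where "S = {m. lc_coeff ys m \<noteq> 0 \<and> mdeg m = mdeg m1}"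
  have fin: "finite (mshift ` S)"
    using finite_lc_coeff_support[of ys] by (intro finite_imageI rev_finite_subset[of _ S]) (auto simp: S_def)
  have "Min (mshift ` S) \<in> mshift ` S" using m1 by (intro Min_in[OF fin]) (auto simp: S_def)
  then obtain ms where ms: "ms \<in> S" "mshift ms = Min (mshift ` S)" by auto
  have ms_min: "mshift ms \<le> mshift m" if "m \<in> S" for m
    unfolding ms(2) using fin that by simp
  have coeff_term: "lc_coeff (dv_term m) (mdeg m1, mshift ms) = (if m = ms then 1 else 0)"
    if "lc_coeff ys m \<noteq> 0" for m
  proof (cases "mdeg m = mdeg m1")
    case True
    then have "mshift ms \<le> mshift m" using ms_min that by (simp add: S_def)
    moreover have "(mdeg m1, mshift ms) = (mdeg m, mshift m) \<longleftrightarrow> m = ms"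
      using True ms(1) mshift_inj[of m ms] by (auto simp: S_def)
    ultimately show ?thesis by (simp add: lc_coeff_dv_term)
  next
    case False
    then show ?thesis using ms by (auto simp: dv_term_def lc_coeff_lift S_def)
  qed
  have "lc_coeff xs (mdeg m1, mshift ms)
      = (\<Sum>m\<in>{k. lc_coeff ys k \<noteq> 0}. if m = ms then lc_coeff ys m else 0)"
    unfolding coeff_xs lc_eval_eq_sum_support by (rule sum.cong) (simp_all add: coeff_term)
  also have "\<dots> = lc_coeff ys ms" using ms(1) finite_lc_coeff_support[of ys] by (simp add: S_def)
  finally have lead: "lc_coeff xs (mdeg m1, mshift ms) \<noteq> 0" using ms(1) by (simp add: S_def)
  then have "log.mixed_relation d xs"
    using d eval_xs ys(2) lead unfolding log.mixed_relation_def by auto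
  then show ?thesis by (rule that)
qed

lemma telescoper_of_hyperalgebraic_multiplicative:
  assumes "hyperalgebraic K \<delta> v"
  shows "linear_telescoper (const_field K \<phi>) K \<phi> \<delta> (\<delta> a * a_inv)"
proof -
  obtain d xs where "log.mixed_relation d xs"
    using log_mixed_relation_of_hyperalgebraic[OF assms] .
  then consider "sequence_telescoper K \<phi> (\<lambda>j. (\<delta>^^j) g)"
    | k0 k1 e where "k0 \<noteq> k1" "e \<in> K" "e \<noteq> 0" "a^k1 * \<phi> e = a^k0 * e"
    using log.mixed_relation_dichotomy by blast
  then show ?thesis
  proof cases
    case 1
    then show ?thesis by (simp add: linear_telescoper_iff g_def)
  next
    case 2
    then show ?thesis using aK aiK aai by (intro telescoper_of_power_eigen_ratio) auto
  qed
qed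

end

lemma sum_atMost_trim_top:
  fixes c :: "nat \<Rightarrow> 'a::semiring_0"
  assumes "i \<le> n" "c i \<noteq> 0"
  obtains n' where "n' \<le> n" "c n' \<noteq> 0" "(\<Sum>j\<le>n. c j * x j) = (\<Sum>j\<le>n'. c j * x j)"
proof -
  define I where "I = {j. j \<le> n \<and> c j \<noteq> 0}"
  have I: "finite I" "i \<in> I" using assms by (auto simp: I_def)
  then have top: "Max I \<in> I" by (intro Max_in) auto
  have above: "c j = 0" if "Max I < j" "j \<le> n" for j
  proof (rule ccontr)
    assume "c j \<noteq> 0"
    then have "j \<in> I" using that by (simp add: I_def)
    then show False using Max_ge[OF I(1)] that by (meson not_le)
  qed
  have "(\<Sum>j\<le>n. c j * x j) = (\<Sum>j\<le>Max I. c j * x j)"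
  proof (rule sum.mono_neutral_right)
    show "{..Max I} \<subseteq> {..n}" using top by (simp add: I_def)
    show "\<forall>j\<in>{..n} - {..Max I}. c j * x j = 0" using above by simp
  qed simp
  then show ?thesis using that[of "Max I"] top by (simp add: I_def)
qed

context eigen_unit begin

text \<open>\<open>v\<^sup>i\<^sup>+\<^sup>1 \<delta>\<^sup>i u\<close> is a differential polynomial in \<open>v\<close> of order \<open>i + 1\<close> whose only term
  involving \<open>\<delta>\<^sup>i\<^sup>+\<^sup>1 v\<close> is \<open>v\<^sup>i \<delta>\<^sup>i\<^sup>+\<^sup>1 v\<close>.\<close>
definition cleared_du where "cleared_du i = v ^ Suc i * du i"
definition cleared_lead where "cleared_lead i = v ^ i * dv (Suc i)"

lemma dv_0: "dv 0 = v" by (simp add: dv_def)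
lemma v_u: "v * u = dv 1"
proof -
  have "v * u = \<delta> v * (v * w)" by (simp add: u_def ac_simps)
  then show ?thesis using vw by (simp add: dv_def)
qed

lemma cleared_du_Suc: "cleared_du (Suc i) = v * \<delta> (cleared_du i) - of_nat (Suc i) * dv 1 * cleared_du i"
proof -
  have dv_pow: "\<delta> (v ^ Suc i) = of_nat (Suc i) * u * v ^ Suc i" unfolding u_def by (rule delta_power[OF vw])
  have "\<delta> (cleared_du i) = of_nat (Suc i) * u * v ^ Suc i * du i + v ^ Suc i * du (Suc i)"
    unfolding cleared_du_def by (simp only: delta_mult dv_pow du_Suc[symmetric]) (simp add: algebra_simps)
  then have "v * \<delta> (cleared_du i) = of_nat (Suc i) * (v * u) * cleared_du i + cleared_du (Suc i)"
    by (simp add: cleared_du_def algebra_simps)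
  then show ?thesis using v_u by simp
qed

lemma cleared_lead_Suc: "v * \<delta> (cleared_lead i) = of_nat i * dv 1 * cleared_lead i + cleared_lead (Suc i)"
proof -
  have dv_pow: "\<delta> (v ^ i) = of_nat i * u * v ^ i" unfolding u_def by (rule delta_power[OF vw])
  have "v * \<delta> (cleared_lead i) = of_nat i * (v * u) * cleared_lead i + cleared_lead (Suc i)"
    unfolding cleared_lead_def by (simp only: delta_mult dv_pow dv_Suc[symmetric]) (simp add: algebra_simps)
  then show ?thesis using v_u by simp
qed

lemma cleared_lead_meval: "cleared_lead i = meval dv (Poly_Mapping.single 0 i + mvar (Suc i))"
  by (simp add: cleared_lead_def meval_add dv_0)

lemma cleared_du_leading: "\<exists>U\<in>lc_span K (meval dv) (\<lambda>m. Poly_Mapping.keys m \<subseteq> {..<Suc i}). cleared_du i = cleared_lead i + U"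
proof (induction i)
  case 0
  have "cleared_du 0 = cleared_lead 0" using v_u by (simp add: cleared_du_def cleared_lead_def du_def)
  then show ?case by (intro bexI[of _ 0]) auto
next
  case (Suc i)
  then obtain U where U: "U \<in> lc_span K (meval dv) (\<lambda>m. Poly_Mapping.keys m \<subseteq> {..<Suc i})" and cleared_du: "cleared_du i = cleared_lead i + U" by blast
  have "cleared_du (Suc i) = v * \<delta> (cleared_lead i) + v * \<delta> U - of_nat (Suc i) * dv 1 * (cleared_lead i + U)"
    unfolding cleared_du_Suc cleared_du by (simp add: algebra_simps)
  also have "\<dots> = cleared_lead (Suc i) + ((- 1) * meval dv (Poly_Mapping.single 0 i + mvar (Suc i) + mvar 1) + v * \<delta> U + (- of_nat (Suc i)) * (U * dv 1))"
    unfolding cleared_lead_Suc by (simp add: cleared_lead_meval meval_add algebra_simps)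
  finally have eq: "cleared_du (Suc i) = cleared_lead (Suc i) + ((- 1) * meval dv (Poly_Mapping.single 0 i + mvar (Suc i) + mvar 1) + v * \<delta> U + (- of_nat (Suc i)) * (U * dv 1))" .
  let ?Q = "\<lambda>m. Poly_Mapping.keys m \<subseteq> {..<Suc (Suc i)}"
  have A: "(- 1) * meval dv (Poly_Mapping.single 0 i + mvar (Suc i) + mvar 1) \<in> lc_span K (meval dv) ?Q"
  proof (rule lc_span_single)
    have k1: "Poly_Mapping.keys (Poly_Mapping.single 0 i + mvar (Suc i)) \<subseteq> {0, Suc i}"
      by (rule order_trans[OF keys_add_subset]) auto
    have "Poly_Mapping.keys (Poly_Mapping.single 0 i + mvar (Suc i) + mvar 1) \<subseteq> {0, Suc i, 1}"
      by (rule order_trans[OF keys_add_subset]) (use k1 in auto)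
    then show "?Q (Poly_Mapping.single 0 i + mvar (Suc i) + mvar 1)" by auto
  qed simp
  have dU: "\<delta> U \<in> lc_span K (meval dv) ?Q"
    using delta_lc_span[where x=dv and Q="\<lambda>_. True" and r=U and j="Suc i", OF dv_Suc] U by simp
  have B: "v * \<delta> U \<in> lc_span K (meval dv) ?Q"
  proof -
    have "\<delta> U * dv 0 \<in> lc_span K (meval dv) ?Q"
    proof (rule lc_span_mult_var[OF dU])
      fix m :: monom assume "?Q m"
      then show "?Q (m + mvar 0)" using keys_add_subset[of m "mvar 0"] by auto
    qed
    then show ?thesis by (simp add: dv_0 mult.commute)
  qed
  have C: "(- of_nat (Suc i)) * (U * dv 1) \<in> lc_span K (meval dv) ?Q"
  proof (rule lc_span_scale)
    show "- of_nat (Suc i) \<in> K" by simp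
    show "U * dv 1 \<in> lc_span K (meval dv) ?Q"
    proof (rule lc_span_mult_var[OF U])
      fix m :: monom assume "Poly_Mapping.keys m \<subseteq> {..<Suc i}"
      then show "?Q (m + mvar 1)" using keys_add_subset[of m "mvar 1"] by auto
    qed
  qed
  show ?case using eq A B C by (blast intro: lc_span_add)
qed

lemma v_power_lc_span: "x \<in> lc_span K (meval dv) (\<lambda>m. Poly_Mapping.keys m \<subseteq> {..<Suc j}) \<Longrightarrow>
    v ^ k * x \<in> lc_span K (meval dv) (\<lambda>m. Poly_Mapping.keys m \<subseteq> {..<Suc j})"
proof (induction k)
  case (Suc k)
  have "v ^ k * x * dv 0 \<in> lc_span K (meval dv) (\<lambda>m. Poly_Mapping.keys m \<subseteq> {..<Suc j})"
  proof (rule lc_span_mult_var[OF Suc.IH[OF Suc.prems]])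
    fix m :: monom assume "Poly_Mapping.keys m \<subseteq> {..<Suc j}"
    then show "Poly_Mapping.keys (m + mvar 0) \<subseteq> {..<Suc j}" using keys_add_subset[of m "mvar 0"] by auto
  qed
  then show ?case by (simp add: dv_0 ac_simps)
qed simp

lemma cleared_sum_leading:
  assumes c: "\<And>i. i \<le> n \<Longrightarrow> c i \<in> K"
  shows "\<exists>X\<in>lc_span K (meval dv) (\<lambda>m. Poly_Mapping.keys m \<subseteq> {..<Suc n}).
    (\<Sum>i\<le>n. c i * (v ^ (n - i) * cleared_du i)) = c n * cleared_lead n + X"
proof -
  let ?span = "lc_span K (meval dv) (\<lambda>m. Poly_Mapping.keys m \<subseteq> {..<Suc n})"
  obtain U where U: "U \<in> ?span" and top: "cleared_du n = cleared_lead n + U"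
    using cleared_du_leading[of n] by blast
  have lower: "c i * (v ^ (n - i) * cleared_du i) \<in> ?span" if "i < n" for i
  proof -
    obtain Ui where Ui: "Ui \<in> lc_span K (meval dv) (\<lambda>m. Poly_Mapping.keys m \<subseteq> {..<Suc i})"
      and Ei: "cleared_du i = cleared_lead i + Ui"
      using cleared_du_leading[of i] by blast
    have "Poly_Mapping.keys (Poly_Mapping.single 0 i + mvar (Suc i)) \<subseteq> {0, Suc i}"
      by (rule order_trans[OF keys_add_subset]) auto
    then have "1 * meval dv (Poly_Mapping.single 0 i + mvar (Suc i)) \<in> ?span"
      using that by (intro lc_span_single) auto
    then have "cleared_lead i \<in> ?span" by (simp add: cleared_lead_meval)
    moreover have "Ui \<in> ?span" using Ui that by (auto elim!: lc_span_mono)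
    ultimately have "cleared_du i \<in> ?span" using Ei by (simp add: lc_span_add)
    then show ?thesis using c that by (intro lc_span_scale v_power_lc_span) auto
  qed
  define X where "X = c n * U + (\<Sum>i<n. c i * (v ^ (n - i) * cleared_du i))"
  have "(\<Sum>i<n. c i * (v ^ (n - i) * cleared_du i)) \<in> ?span" by (rule lc_span_sum) (simp add: lower)
  then have "X \<in> ?span" unfolding X_def using c U by (intro lc_span_add lc_span_scale) auto
  moreover have "(\<Sum>i\<le>n. c i * (v ^ (n - i) * cleared_du i)) = c n * cleared_lead n + X"
    by (simp add: X_def top lessThan_Suc_atMost[symmetric] algebra_simps)
  ultimately show ?thesis by blast
qed

text \<open>Multiplying the relation by \<open>v\<^sup>n\<^sup>+\<^sup>1\<close> clears all denominators.\<close>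
lemma hyperalgebraic_of_du_relation:
  assumes c: "\<And>i. i \<le> n \<Longrightarrow> c i \<in> K" and c_top: "c n \<noteq> 0" and G: "G \<in> K"
    and rel: "(\<Sum>i\<le>n. c i * du i) = G"
  shows "hyperalgebraic K \<delta> v"
proof -
  have "v ^ (n - i) * cleared_du i = v ^ Suc n * du i" if "i \<le> n" for i
  proof -
    have "v ^ (n - i) * v ^ i = v ^ n" using that by (simp flip: power_add)
    then have "v ^ (n - i) * v ^ Suc i = v ^ Suc n" by (metis mult.left_commute power_Suc)
    then show ?thesis by (simp add: cleared_du_def mult.assoc[symmetric])
  qed
  then have cleared: "(\<Sum>i\<le>n. c i * (v ^ (n - i) * cleared_du i)) = v ^ Suc n * G"
    by (simp add: rel[symmetric] sum_distrib_left algebra_simps)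
  obtain X where X: "X \<in> lc_span K (meval dv) (\<lambda>m. Poly_Mapping.keys m \<subseteq> {..<Suc n})"
    and sum_X: "(\<Sum>i\<le>n. c i * (v ^ (n - i) * cleared_du i)) = c n * cleared_lead n + X"
    using cleared_sum_leading[of n c] c by blast
  obtain LX where LX: "lc_over K (\<lambda>m. Poly_Mapping.keys m \<subseteq> {..<Suc n}) LX"
    "lc_eval (meval dv) LX = X"
    using X by (auto simp: lc_span_def)
  define M where "M = Poly_Mapping.single 0 n + mvar (Suc n)"
  define xs where "xs = [(M, c n), (Poly_Mapping.single 0 (Suc n), - G)] @ LX"
  have "lc_eval (meval dv) xs = c n * cleared_lead n + X - v ^ Suc n * G"
    using LX(2) by (simp add: xs_def M_def cleared_lead_meval dv_0 algebra_simps)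
  then have "lc_eval (meval dv) xs = 0" using cleared sum_X by simp
  moreover have "lc_over K (\<lambda>_. True) xs" using LX(1) c G by (auto simp: xs_def lc_over_def)
  moreover have "lc_coeff xs M = c n"
  proof -
    have "Suc n \<in> Poly_Mapping.keys M" by (simp add: M_def in_keys_iff lookup_add)
    then have "lc_coeff LX M = 0"
      using LX(1) by (intro lc_coeff_notin) (force simp: lc_over_def)
    moreover have "Poly_Mapping.single 0 (Suc n) \<noteq> M"
    proof
      assume "Poly_Mapping.single 0 (Suc n) = M"
      then have "Poly_Mapping.lookup (Poly_Mapping.single 0 (Suc n)) (Suc n) = Poly_Mapping.lookup M (Suc n)"
        by simp
      then show False by (simp add: M_def lookup_add lookup_single)
    qed
    ultimately show ?thesis by (simp add: xs_def)
  qed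
  moreover have "(\<lambda>i. (\<delta>^^i) v) = dv" by (simp add: dv_def fun_eq_iff)
  ultimately show ?thesis unfolding hyperalgebraic_iff_lc_relation using c_top by metis
qed

lemma hyperalgebraic_of_telescoper_multiplicative:
  assumes fixc: "{x. \<phi> x = x} = const_field K \<phi>"
    and tel: "linear_telescoper (const_field K \<phi>) K \<phi> \<delta> (\<delta> a * a_inv)"
  shows "hyperalgebraic K \<delta> v"
proof -
  obtain n c f where c: "\<forall>i\<le>n. c i \<in> K \<and> \<phi> (c i) = c i" and c_nonzero: "\<exists>i\<le>n. c i \<noteq> 0"
    and f: "f \<in> K" and eq: "(\<Sum>i\<le>n. c i * (\<delta>^^i) g) = \<phi> f - f"
    using tel unfolding linear_telescoper_iff sequence_telescoper_def g_def by blast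
  define H where "H = (\<Sum>i\<le>n. c i * du i) - f"
  have "\<phi> H = (\<Sum>i\<le>n. c i * (du i + (\<delta>^^i) g)) - \<phi> f"
    using c by (simp add: H_def phi_sum du_def phi_delta_iter phi_u)
  also have "\<dots> = H" unfolding H_def using eq by (simp add: algebra_simps sum.distrib)
  finally have "H \<in> K" by (rule phi_fixed_in_K[OF fixc])
  obtain i where "i \<le> n" "c i \<noteq> 0" using c_nonzero by blast
  then obtain n' where n': "n' \<le> n" "c n' \<noteq> 0" "(\<Sum>i\<le>n. c i * du i) = (\<Sum>i\<le>n'. c i * du i)"
    by (rule sum_atMost_trim_top)
  show ?thesis
  proof (rule hyperalgebraic_of_du_relation[of n' c "f + H"])
    show "(\<Sum>i\<le>n'. c i * du i) = f + H" using n'(3) by (simp add: H_def)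
    show "f + H \<in> K" using f \<open>H \<in> K\<close> by simp
    show "c i \<in> K" if "i \<le> n'" for i using c n'(1) that by simp
  qed (use n' in simp)
qed

end

theorem proposition2p6:
  fixes K :: "'r::comm_ring_1 set" and \<phi> \<delta> :: "'r \<Rightarrow> 'r" and a a_inv b v :: 'r
  assumes setting: "phi_delta_setting K \<phi> \<delta>"
    and kclosed: "alg_closed_subfield (const_field K \<phi>)"
    and a: "a \<in> K" "a \<noteq> 0" and a_inv: "a_inv \<in> K" "a * a_inv = 1"
    and b: "b \<in> K"
    and v: "v \<noteq> 0"
  shows "((\<phi> v - v = b \<and> hyperalgebraic K \<delta> v)
            \<longrightarrow> linear_telescoper (const_field K \<phi>) K \<phi> \<delta> b)
       \<and> (((\<exists>w. v * w = 1) \<and> \<phi> v = a * v \<and> hyperalgebraic K \<delta> v)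
            \<longrightarrow> linear_telescoper (const_field K \<phi>) K \<phi> \<delta> (\<delta> a * a_inv))
       \<and> ({x. \<phi> x = x} = const_field K \<phi> \<longrightarrow>
            ((\<phi> v - v = b \<and> linear_telescoper (const_field K \<phi>) K \<phi> \<delta> b)
               \<longrightarrow> hyperalgebraic K \<delta> v)
          \<and> (((\<exists>w. v * w = 1) \<and> \<phi> v = a * v \<and> linear_telescoper (const_field K \<phi>) K \<phi> \<delta> (\<delta> a * a_inv))
               \<longrightarrow> hyperalgebraic K \<delta> v))"
proof -
  have field: "phi_delta_field K \<phi> \<delta>" using setting by (rule phi_delta_field.intro)
  have unit: "eigen_unit K \<phi> \<delta> v w a a_inv" if "v * w = 1" "\<phi> v = a * v" for w
    using that a a_inv by (intro eigen_unit.intro[OF field] eigen_unit_axioms.intro)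
  show ?thesis
    using phi_delta_field.telescoper_of_hyperalgebraic_additive[OF field b]
      phi_delta_field.hyperalgebraic_of_telescoper_additive[OF field]
      eigen_unit.telescoper_of_hyperalgebraic_multiplicative[OF unit]
      eigen_unit.hyperalgebraic_of_telescoper_multiplicative[OF unit]
    by blast
qed

end
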